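(* Let $G$ be a finite group and let $S$ be a symmetric sequence of $G$-sets whose levels $S_n$ are $\Sigma_n$-free and such that $S_0^G\neq\varnothing$ and $S_2^G\neq\varnothing$. Then the free operad $\mathbb{F}(S)$ is $\Sigma$-free with $\mathbb{F}(S)(n)^G\neq\varnothing$ for every $n\geq0$, and the class of admissible sets of $\mathbb{F}(S)$ equals the indexing system generated by the class of admissible sets of $S$.
   Context: A symmetric sequence of $G$-sets is a sequence $(S_n)_{n\geq0}$ with $S_n$ a $G\times\Sigma_n$-set; $\mathbb{F}$ is the free operad functor to operads in $G$-sets. For a finite $H$-set $T$ ($H\subseteq G$) with chosen ordering $\{1,\dots,n\}\cong T$, let $\sigma:H\to\Sigma_n$ be the permutation representation and $\Gamma_T=\{(h,\sigma(h))\}\subseteq G\times\Sigma_n$. $T$ is an admissible set of a symmetric sequence (or operad) $X$ if $X(n)^{\Gamma_T}\neq\varnothing$ (independent of the ordering). An indexing system (Blumberg–Hill) is a family of finite $H$-sets, for all $H\subseteq G$, containing the trivial actions and closed under isomorphism, restriction, conjugation, subobjects, finite coproducts and products, and self-induction; the indexing system generated by a class is the smallest one containing it. *)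

theory Defs
  imports "HOL-Algebra.Group" "HOL-Combinatorics.Permutations"
begin

text \<open>A symmetric sequence of G-sets: level n is the set S n, carrying a (left) action
  act n g sigma x of the product group G x Sigma_n, where Sigma_n is the group of
  permutations of the set {..<n} (under composition).\<close>

definition symseq :: "('g, 'b) monoid_scheme \<Rightarrow> (nat \<Rightarrow> 'x set)
      \<Rightarrow> (nat \<Rightarrow> 'g \<Rightarrow> (nat \<Rightarrow> nat) \<Rightarrow> 'x \<Rightarrow> 'x) \<Rightarrow> bool" where
  "symseq G S act \<longleftrightarrow> (\<forall>n.
     (\<forall>x\<in>S n. \<forall>g\<in>carrier G. \<forall>\<sigma>. \<sigma> permutes {..<n} \<longrightarrow> act n g \<sigma> x \<in> S n) \<and>
     (\<forall>x\<in>S n. act n \<one>\<^bsub>G\<^esub> id x = x) \<and>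
     (\<forall>x\<in>S n. \<forall>g\<in>carrier G. \<forall>g'\<in>carrier G. \<forall>\<sigma> \<sigma>'.
        \<sigma> permutes {..<n} \<longrightarrow> \<sigma>' permutes {..<n} \<longrightarrow>
        act n (g \<otimes>\<^bsub>G\<^esub> g') (\<sigma> \<circ> \<sigma>') x = act n g \<sigma> (act n g' \<sigma>' x)))"

definition levels_sigma_free :: "('g, 'b) monoid_scheme \<Rightarrow> (nat \<Rightarrow> 'x set)
      \<Rightarrow> (nat \<Rightarrow> 'g \<Rightarrow> (nat \<Rightarrow> nat) \<Rightarrow> 'x \<Rightarrow> 'x) \<Rightarrow> bool" where
  "levels_sigma_free G S act \<longleftrightarrow> (\<forall>n. \<forall>x\<in>S n. \<forall>\<sigma>.
     \<sigma> permutes {..<n} \<longrightarrow> act n \<one>\<^bsub>G\<^esub> \<sigma> x = x \<longrightarrow> \<sigma> = id)"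

definition level_has_G_fixed :: "('g, 'b) monoid_scheme \<Rightarrow> (nat \<Rightarrow> 'x set)
      \<Rightarrow> (nat \<Rightarrow> 'g \<Rightarrow> (nat \<Rightarrow> nat) \<Rightarrow> 'x \<Rightarrow> 'x) \<Rightarrow> nat \<Rightarrow> bool" where
  "level_has_G_fixed G S act n \<longleftrightarrow> (\<exists>x\<in>S n. \<forall>g\<in>carrier G. act n g id x = x)"

text \<open>A finite H-set (H a subgroup of G) with a chosen ordering of its n elements is
  encoded by the triple (H, n, rho), where rho h is the permutation of {..<n} by which
  h acts (the permutation representation). rho is normalised to be the identity
  outside H, so that triples are canonical.\<close>

type_synonym 'g hset = "'g set \<times> nat \<times> ('g \<Rightarrow> nat \<Rightarrow> nat)"

definition fhset :: "('g, 'b) monoid_scheme \<Rightarrow> 'g set \<Rightarrow> nat \<Rightarrow> ('g \<Rightarrow> nat \<Rightarrow> nat) \<Rightarrow> bool" where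
  "fhset G H n \<rho> \<longleftrightarrow> subgroup H G \<and> (\<forall>h\<in>H. \<rho> h permutes {..<n}) \<and>
     (\<forall>h\<in>H. \<forall>h'\<in>H. \<rho> (h \<otimes>\<^bsub>G\<^esub> h') = \<rho> h \<circ> \<rho> h') \<and> (\<forall>h. h \<notin> H \<longrightarrow> \<rho> h = id)"

text \<open>(H, N, rho') is (isomorphic to) the induced H-set H x_K T, for T = (K, n, rho):
  there is a map j : T \<rightarrow> X such that (h,t) \<mapsto> h.j(t) is surjective onto X and
  identifies exactly the pairs identified in H x_K T, i.e. (hk, t) ~ (h, k t).\<close>
definition induced_hset :: "('g, 'b) monoid_scheme \<Rightarrow> 'g set \<Rightarrow> 'g set \<Rightarrow> nat \<Rightarrow> ('g \<Rightarrow> nat \<Rightarrow> nat)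
      \<Rightarrow> nat \<Rightarrow> ('g \<Rightarrow> nat \<Rightarrow> nat) \<Rightarrow> bool" where
  "induced_hset G H K n \<rho> N \<rho>' \<longleftrightarrow> (\<exists>j.
     (\<forall>t<n. j t < N) \<and>
     (\<forall>x<N. \<exists>h\<in>H. \<exists>t<n. x = \<rho>' h (j t)) \<and>
     (\<forall>h\<in>H. \<forall>h'\<in>H. \<forall>t<n. \<forall>t'<n.
        \<rho>' h (j t) = \<rho>' h' (j t') \<longleftrightarrow> (\<exists>k\<in>K. h' = h \<otimes>\<^bsub>G\<^esub> k \<and> t = \<rho> k t')))"

definition indexing_system :: "('g, 'b) monoid_scheme \<Rightarrow> 'g hset set \<Rightarrow> bool" where
  "indexing_system G I \<longleftrightarrow>
     (\<forall>(H, n, \<rho>)\<in>I. fhset G H n \<rho>) \<and>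
     \<comment> \<open>contains the trivial actions\<close>
     (\<forall>H n. subgroup H G \<longrightarrow> (H, n, \<lambda>h. id) \<in> I) \<and>
     \<comment> \<open>closed under isomorphism\<close>
     (\<forall>H n \<rho> \<rho>' f. (H, n, \<rho>) \<in> I \<longrightarrow> fhset G H n \<rho>' \<longrightarrow> bij_betw f {..<n} {..<n} \<longrightarrow>
        (\<forall>h\<in>H. \<forall>i<n. f (\<rho>' h i) = \<rho> h (f i)) \<longrightarrow> (H, n, \<rho>') \<in> I) \<and>
     \<comment> \<open>closed under subobjects (H-sets admitting an equivariant injection)\<close>
     (\<forall>H n m \<rho> \<rho>' f. (H, n, \<rho>) \<in> I \<longrightarrow> fhset G H m \<rho>' \<longrightarrow> inj_on f {..<m} \<longrightarrow>
        f ` {..<m} \<subseteq> {..<n} \<longrightarrow>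
        (\<forall>h\<in>H. \<forall>i<m. f (\<rho>' h i) = \<rho> h (f i)) \<longrightarrow> (H, m, \<rho>') \<in> I) \<and>
     \<comment> \<open>closed under restriction\<close>
     (\<forall>H n \<rho> K. (H, n, \<rho>) \<in> I \<longrightarrow> subgroup K G \<longrightarrow> K \<subseteq> H \<longrightarrow>
        (K, n, \<lambda>h. if h \<in> K then \<rho> h else id) \<in> I) \<and>
     \<comment> \<open>closed under conjugation\<close>
     (\<forall>H n \<rho> g. (H, n, \<rho>) \<in> I \<longrightarrow> g \<in> carrier G \<longrightarrow>
        ((\<lambda>h. g \<otimes>\<^bsub>G\<^esub> h \<otimes>\<^bsub>G\<^esub> inv\<^bsub>G\<^esub> g) ` H, n,
         \<lambda>h. if h \<in> (\<lambda>h. g \<otimes>\<^bsub>G\<^esub> h \<otimes>\<^bsub>G\<^esub> inv\<^bsub>G\<^esub> g) ` H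
             then \<rho> (inv\<^bsub>G\<^esub> g \<otimes>\<^bsub>G\<^esub> h \<otimes>\<^bsub>G\<^esub> g) else id) \<in> I) \<and>
     \<comment> \<open>closed under finite coproducts (disjoint union, encoded on {..<n+m})\<close>
     (\<forall>H n \<rho> m \<rho>'. (H, n, \<rho>) \<in> I \<longrightarrow> (H, m, \<rho>') \<in> I \<longrightarrow>
        (H, n + m, \<lambda>h. if h \<in> H then (\<lambda>i. if i < n then \<rho> h i
                                     else if i < n + m then n + \<rho>' h (i - n) else i)
                      else id) \<in> I) \<and>
     \<comment> \<open>closed under finite products (pair (i,j) encoded as i*m+j)\<close>
     (\<forall>H n \<rho> m \<rho>'. (H, n, \<rho>) \<in> I \<longrightarrow> (H, m, \<rho>') \<in> I \<longrightarrow>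
        (H, n * m, \<lambda>h. if h \<in> H then (\<lambda>i. if i < n * m
                                          then \<rho> h (i div m) * m + \<rho>' h (i mod m) else i)
                      else id) \<in> I) \<and>
     \<comment> \<open>closed under self-induction: H/K in I(H) and T in I(K) imply H x_K T in I(H)\<close>
     (\<forall>H K n \<rho> N \<rho>'. subgroup H G \<longrightarrow> subgroup K G \<longrightarrow> K \<subseteq> H \<longrightarrow> (K, n, \<rho>) \<in> I \<longrightarrow>
        (\<exists>m \<tau>. (H, m, \<tau>) \<in> I \<and> induced_hset G H K 1 (\<lambda>h. id) m \<tau>) \<longrightarrow>
        fhset G H N \<rho>' \<longrightarrow> induced_hset G H K n \<rho> N \<rho>' \<longrightarrow> (H, N, \<rho>') \<in> I)"

definition gen_indexing_system :: "('g, 'b) monoid_scheme \<Rightarrow> 'g hset set \<Rightarrow> 'g hset set" where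
  "gen_indexing_system G C = \<Inter>{I. indexing_system G I \<and> C \<subseteq> I}"

text \<open>Admissible sets of a symmetric sequence: X(n)^Gamma_T nonempty, where
  Gamma_T = {(h, rho h) | h in H}.\<close>
definition adm_seq :: "('g, 'b) monoid_scheme \<Rightarrow> (nat \<Rightarrow> 'x set)
      \<Rightarrow> (nat \<Rightarrow> 'g \<Rightarrow> (nat \<Rightarrow> nat) \<Rightarrow> 'x \<Rightarrow> 'x) \<Rightarrow> 'g hset set" where
  "adm_seq G S act = {(H, n, \<rho>). fhset G H n \<rho> \<and> (\<exists>x\<in>S n. \<forall>h\<in>H. act n h (\<rho> h) x = x)}"

text \<open>Elements of F(S)(n) are represented by planar trees whose leaves are labelled
  bijectively by {..<n} and whose vertices with k inputs are decorated by elements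
  of S k, modulo the equivalence relation generated by
  Node (sigma . x) [t_0,...,t_{k-1}] ~ Node x [t_{sigma 0},...,t_{sigma (k-1)}]
  (and congruence).  The leaf Leaf 0 is the operadic unit.\<close>

datatype 'x ftree = Leaf nat | Node 'x "'x ftree list"

fun leaves :: "'x ftree \<Rightarrow> nat list" where
  "leaves (Leaf i) = [i]"
| "leaves (Node x ts) = concat (map leaves ts)"

fun labels_ok :: "(nat \<Rightarrow> 'x set) \<Rightarrow> 'x ftree \<Rightarrow> bool" where
  "labels_ok S (Leaf i) = True"
| "labels_ok S (Node x ts) = (x \<in> S (length ts) \<and> (\<forall>t\<in>set ts. labels_ok S t))"

definition fo_wf :: "(nat \<Rightarrow> 'x set) \<Rightarrow> nat \<Rightarrow> 'x ftree \<Rightarrow> bool" where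
  "fo_wf S n t \<longleftrightarrow> labels_ok S t \<and> distinct (leaves t) \<and> set (leaves t) = {..<n}"

fun tree_gact :: "(nat \<Rightarrow> 'g \<Rightarrow> (nat \<Rightarrow> nat) \<Rightarrow> 'x \<Rightarrow> 'x) \<Rightarrow> 'g \<Rightarrow> 'x ftree \<Rightarrow> 'x ftree" where
  "tree_gact act g (Leaf i) = Leaf i"
| "tree_gact act g (Node x ts) = Node (act (length ts) g id x) (map (tree_gact act g) ts)"

fun tree_relabel :: "(nat \<Rightarrow> nat) \<Rightarrow> 'x ftree \<Rightarrow> 'x ftree" where
  "tree_relabel \<sigma> (Leaf i) = Leaf (\<sigma> i)"
| "tree_relabel \<sigma> (Node x ts) = Node x (map (tree_relabel \<sigma>) ts)"

definition tree_act :: "(nat \<Rightarrow> 'g \<Rightarrow> (nat \<Rightarrow> nat) \<Rightarrow> 'x \<Rightarrow> 'x) \<Rightarrow> 'g \<Rightarrow> (nat \<Rightarrow> nat)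
      \<Rightarrow> 'x ftree \<Rightarrow> 'x ftree" where
  "tree_act act g \<sigma> t = tree_relabel \<sigma> (tree_gact act g t)"

inductive tree_eq :: "('g, 'b) monoid_scheme \<Rightarrow> (nat \<Rightarrow> 'x set)
      \<Rightarrow> (nat \<Rightarrow> 'g \<Rightarrow> (nat \<Rightarrow> nat) \<Rightarrow> 'x \<Rightarrow> 'x) \<Rightarrow> 'x ftree \<Rightarrow> 'x ftree \<Rightarrow> bool"
  for G S act where
  te_refl: "tree_eq G S act t t"
| te_sym: "tree_eq G S act t u \<Longrightarrow> tree_eq G S act u t"
| te_trans: "tree_eq G S act t u \<Longrightarrow> tree_eq G S act u v \<Longrightarrow> tree_eq G S act t v"
| te_cong: "list_all2 (tree_eq G S act) ts us \<Longrightarrow> tree_eq G S act (Node x ts) (Node x us)"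
| te_swap: "\<sigma> permutes {..<length ts} \<Longrightarrow> x \<in> S (length ts) \<Longrightarrow>
    tree_eq G S act (Node (act (length ts) \<one>\<^bsub>G\<^esub> \<sigma> x) ts)
                    (Node x (map (\<lambda>i. ts ! \<sigma> i) [0..<length ts]))"
  monos list.rel_mono

definition fo_sigma_free :: "('g, 'b) monoid_scheme \<Rightarrow> (nat \<Rightarrow> 'x set)
      \<Rightarrow> (nat \<Rightarrow> 'g \<Rightarrow> (nat \<Rightarrow> nat) \<Rightarrow> 'x \<Rightarrow> 'x) \<Rightarrow> bool" where
  "fo_sigma_free G S act \<longleftrightarrow> (\<forall>n t \<sigma>. fo_wf S n t \<longrightarrow> \<sigma> permutes {..<n} \<longrightarrow>
      tree_eq G S act (tree_relabel \<sigma> t) t \<longrightarrow> \<sigma> = id)"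

definition fo_has_G_fixed :: "('g, 'b) monoid_scheme \<Rightarrow> (nat \<Rightarrow> 'x set)
      \<Rightarrow> (nat \<Rightarrow> 'g \<Rightarrow> (nat \<Rightarrow> nat) \<Rightarrow> 'x \<Rightarrow> 'x) \<Rightarrow> nat \<Rightarrow> bool" where
  "fo_has_G_fixed G S act n \<longleftrightarrow>
     (\<exists>t. fo_wf S n t \<and> (\<forall>g\<in>carrier G. tree_eq G S act (tree_gact act g t) t))"

definition adm_fo :: "('g, 'b) monoid_scheme \<Rightarrow> (nat \<Rightarrow> 'x set)
      \<Rightarrow> (nat \<Rightarrow> 'g \<Rightarrow> (nat \<Rightarrow> nat) \<Rightarrow> 'x \<Rightarrow> 'x) \<Rightarrow> 'g hset set" where
  "adm_fo G S act = {(H, n, \<rho>). fhset G H n \<rho> \<and>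
     (\<exists>t. fo_wf S n t \<and> (\<forall>h\<in>H. tree_eq G S act (tree_act act h (\<rho> h) t) t))}"

end

theory Submission
  imports Defs
begin

text \<open>An element of \<open>F(S)(n)\<close> is a tree with vertices decorated by \<open>S\<close> and leaves labelled by
  \<open>{..<n}\<close>, up to permuting the children of a vertex while changing its decoration accordingly.
  Freeness of the levels \<open>S\<^sub>k\<close> propagates to \<open>F(S)\<close> by induction over trees, and a corolla on a
  \<open>G\<close>-fixed point of \<open>S\<^sub>0\<close> and combs on a \<open>G\<close>-fixed point of \<open>S\<^sub>2\<close> are \<open>G\<close>-fixed trees of every arity.

  Grafting shows that the admissible sets of \<open>F(S)\<close> form an indexing system: coproducts graft two
  trees onto a fixed binary vertex, products graft copies of one tree onto the leaves of another,
  subobjects cap the superfluous leaves with a fixed nullary vertex, and self-induction grafts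
  translates of a tree for \<open>T\<close> onto the leaves of a tree for \<open>H/K\<close>.  Corollas show that the
  admissible sets of \<open>S\<close> are admissible for \<open>F(S)\<close>.

  Conversely, if \<open>H\<close> fixes a tree with root decoration \<open>x\<close>, then \<open>H\<close> permutes the children of the
  root through an admissible set of \<open>S\<close> fixing \<open>x\<close> (unique by freeness).  The leaves above an orbit
  of children form the \<open>H\<close>-set induced from the leaves above one child, an \<open>H/K\<close> for its stabiliser
  \<open>K\<close>, and \<open>H/K\<close> is a subobject of that admissible set.  Hence, by induction on the tree, every
  admissible set of \<open>F(S)\<close> lies in each indexing system containing the admissible sets of \<open>S\<close>.\<close>

text \<open>The inverse of a permutation; \<open>inv\<close> denotes the group inverse below.\<close>

abbreviation pinv :: "(nat \<Rightarrow> nat) \<Rightarrow> nat \<Rightarrow> nat" where "pinv f \<equiv> Hilbert_Choice.inv f"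

section \<open>The equivalence relation on decorated trees\<close>

locale symseq_action = group G for G :: "('g, 'b) monoid_scheme" (structure) +
  fixes S :: "nat \<Rightarrow> 'x set"
    and act :: "nat \<Rightarrow> 'g \<Rightarrow> (nat \<Rightarrow> nat) \<Rightarrow> 'x \<Rightarrow> 'x"
  assumes symseq: "symseq G S act"
begin

lemma act_closed: "x \<in> S k \<Longrightarrow> g \<in> carrier G \<Longrightarrow> \<sigma> permutes {..<k} \<Longrightarrow> act k g \<sigma> x \<in> S k"
  using symseq unfolding symseq_def by blast

lemma act_one: "x \<in> S k \<Longrightarrow> act k \<one> id x = x"
  using symseq unfolding symseq_def by blast

lemma act_comp: "x \<in> S k \<Longrightarrow> g \<in> carrier G \<Longrightarrow> g' \<in> carrier G \<Longrightarrow> \<sigma> permutes {..<k} \<Longrightarrow>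
   \<sigma>' permutes {..<k} \<Longrightarrow> act k (g \<otimes> g') (\<sigma> \<circ> \<sigma>') x = act k g \<sigma> (act k g' \<sigma>' x)"
  using symseq unfolding symseq_def by blast

lemma act_one_inv_perm:
  assumes "x \<in> S k" "\<sigma> permutes {..<k}"
  shows "act k \<one> (pinv \<sigma>) (act k \<one> \<sigma> x) = x"
  using act_comp[OF assms(1) one_closed one_closed permutes_inv[OF assms(2)] assms(2)]
    permutes_inv_o(2)[OF assms(2)] act_one[OF assms(1)] by simp

text \<open>The second disjunct is the relation generated by the swap rule of \<^const>\<open>tree_eq\<close>;
  the first one makes the relation reflexive also on decorations outside \<open>S k\<close>.\<close>

definition vertex_rel :: "nat \<Rightarrow> (nat \<Rightarrow> nat) \<Rightarrow> 'x \<Rightarrow> 'x \<Rightarrow> bool" where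
  "vertex_rel k \<pi> x y \<longleftrightarrow> (\<pi> = id \<and> x = y) \<or> (y \<in> S k \<and> x = act k \<one> \<pi> y)"

lemma vertex_rel_refl: "vertex_rel k id x x"
  by (simp add: vertex_rel_def)

lemma vertex_rel_sym:
  assumes "\<pi> permutes {..<k}" and "vertex_rel k \<pi> x y"
  shows "vertex_rel k (pinv \<pi>) y x"
  using assms act_one_inv_perm act_closed[OF _ one_closed assms(1)] by (auto simp: vertex_rel_def)

lemma vertex_rel_trans:
  assumes "\<pi> permutes {..<k}" and "\<pi>' permutes {..<k}" and "vertex_rel k \<pi> x y" and "vertex_rel k \<pi>' y z"
  shows "vertex_rel k (\<pi> \<circ> \<pi>') x z"
  using assms act_comp[of z k \<one> \<one> \<pi> \<pi>'] unfolding vertex_rel_def by auto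

text \<open>\<^const>\<open>tree_eq\<close> described explicitly: the children of a vertex may be permuted if its
  decoration is changed by the same permutation.\<close>

inductive tree_iso :: "'x ftree \<Rightarrow> 'x ftree \<Rightarrow> bool" where
  tree_iso_Leaf: "tree_iso (Leaf i) (Leaf i)"
| tree_iso_Node: "length ts = length us \<Longrightarrow> \<pi> permutes {..<length us} \<Longrightarrow>
    vertex_rel (length us) \<pi> x y \<Longrightarrow> (\<forall>i<length us. tree_iso (ts ! \<pi> i) (us ! i)) \<Longrightarrow>
    tree_iso (Node x ts) (Node y us)"

lemma tree_iso_refl: "tree_iso t t"
proof (induction t)
  case (Leaf i)
  then show ?case by (rule tree_iso_Leaf)
next
  case (Node x ts)
  then show ?case by (intro tree_iso_Node[of _ _ id]) (auto simp: vertex_rel_refl)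
qed

lemma tree_iso_sym: "tree_iso t u \<Longrightarrow> tree_iso u t"
proof (induction rule: tree_iso.induct)
  case (tree_iso_Leaf i)
  then show ?case by (rule tree_iso.tree_iso_Leaf)
next
  case (tree_iso_Node ts us \<pi> x y)
  have inv: "pinv \<pi> permutes {..<length us}"
    using permutes_inv[OF tree_iso_Node(2)] .
  show ?case
  proof (rule tree_iso.tree_iso_Node[of _ _ "pinv \<pi>"])
    show "\<forall>i<length ts. tree_iso (us ! pinv \<pi> i) (ts ! i)"
    proof (intro allI impI)
      fix i assume "i < length ts"
      then have "pinv \<pi> i < length us"
        using tree_iso_Node(1) permutes_in_image[OF inv] by auto
      then show "tree_iso (us ! pinv \<pi> i) (ts ! i)"
        using tree_iso_Node(4) permutes_inverses(1)[OF tree_iso_Node(2)] by metis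
    qed
  qed (use tree_iso_Node inv vertex_rel_sym in auto)
qed

lemma tree_iso_trans: "tree_iso t u \<Longrightarrow> tree_iso u v \<Longrightarrow> tree_iso t v"
proof (induction arbitrary: v rule: tree_iso.induct)
  case (tree_iso_Leaf i)
  then show ?case by simp
next
  case (tree_iso_Node ts us \<pi> x y)
  from tree_iso_Node(5) obtain vs z \<pi>' where v: "v = Node z vs" and l: "length us = length vs"
    and p': "\<pi>' permutes {..<length vs}" and r': "vertex_rel (length vs) \<pi>' y z"
    and sub: "\<forall>i<length vs. tree_iso (us ! \<pi>' i) (vs ! i)"
    by (cases rule: tree_iso.cases) auto
  show ?case unfolding v
  proof (rule tree_iso.tree_iso_Node[of _ _ "\<pi> \<circ> \<pi>'"])
    show "\<pi> \<circ> \<pi>' permutes {..<length vs}"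
      using tree_iso_Node(2) p' l permutes_compose by auto
    show "\<forall>i<length vs. tree_iso (ts ! (\<pi> \<circ> \<pi>') i) (vs ! i)"
      using tree_iso_Node(4) sub l permutes_in_image[OF p'] by auto
  qed (use tree_iso_Node l p' r' vertex_rel_trans in auto)
qed

lemma tree_eq_imp_tree_iso: "tree_eq G S act t u \<Longrightarrow> tree_iso t u"
proof (induction rule: tree_eq.induct)
  case (te_cong ts us x)
  then show ?case
    by (intro tree_iso_Node[of _ _ id]) (auto simp: vertex_rel_refl list_all2_conv_all_nth)
next
  case (te_swap \<sigma> ts x)
  then show ?case
    by (intro tree_iso_Node[of _ _ \<sigma>])
      (auto simp: vertex_rel_def tree_iso_refl permutes_in_image)
qed (use tree_iso_refl tree_iso_sym tree_iso_trans in blast)+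

lemma tree_iso_imp_tree_eq: "tree_iso t u \<Longrightarrow> tree_eq G S act t u"
proof (induction rule: tree_iso.induct)
  case (tree_iso_Leaf i)
  then show ?case by (rule te_refl)
next
  case (tree_iso_Node ts us \<pi> x y)
  have children: "tree_eq G S act (Node y (map (\<lambda>i. ts ! \<pi> i) [0..<length ts])) (Node y us)"
    using tree_iso_Node by (auto intro!: te_cong simp: list_all2_conv_all_nth)
  show ?case
  proof (cases "\<pi> = id \<and> x = y")
    case True
    then show ?thesis using children map_nth[of ts] tree_iso_Node(1) by simp
  next
    case False
    then have y: "y \<in> S (length us)" and x: "x = act (length us) \<one> \<pi> y"
      using tree_iso_Node(3) by (auto simp: vertex_rel_def)
    have "tree_eq G S act (Node x ts) (Node y (map (\<lambda>i. ts ! \<pi> i) [0..<length ts]))"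
      unfolding x using te_swap[of \<pi> ts y] tree_iso_Node(1,2) y by simp
    then show ?thesis using children by (rule te_trans)
  qed
qed

lemma tree_eq_iff_tree_iso: "tree_eq G S act t u \<longleftrightarrow> tree_iso t u"
  using tree_eq_imp_tree_iso tree_iso_imp_tree_eq by blast

end

section \<open>Grafting and relabelling trees\<close>

fun graft :: "'x ftree \<Rightarrow> (nat \<Rightarrow> 'x ftree) \<Rightarrow> 'x ftree" where
  "graft (Leaf i) f = f i"
| "graft (Node x ts) f = Node x (map (\<lambda>t. graft t f) ts)"

lemma leaves_tree_relabel: "leaves (tree_relabel \<sigma> t) = map \<sigma> (leaves t)"
  by (induction t) (auto simp: map_concat cong: map_cong)

lemma tree_relabel_tree_relabel: "tree_relabel \<sigma> (tree_relabel \<tau> t) = tree_relabel (\<sigma> \<circ> \<tau>) t"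
  by (induction t) auto

lemma tree_relabel_id: "tree_relabel id t = t"
  by (induction t) (auto intro: map_idI)

lemma tree_relabel_cong:
  "(\<And>i. i \<in> set (leaves t) \<Longrightarrow> \<sigma> i = \<tau> i) \<Longrightarrow> tree_relabel \<sigma> t = tree_relabel \<tau> t"
  by (induction t) auto

lemma labels_ok_tree_relabel [simp]: "labels_ok S (tree_relabel \<sigma> t) = labels_ok S t"
  by (induction t) auto

lemma leaves_tree_gact [simp]: "leaves (tree_gact act g t) = leaves t"
  by (induction t) (auto cong: map_cong)

lemma tree_gact_tree_relabel:
  "tree_gact act g (tree_relabel \<sigma> t) = tree_relabel \<sigma> (tree_gact act g t)"
  by (induction t) auto

lemma tree_act_Node:
  "tree_act act h \<sigma> (Node x ts) = Node (act (length ts) h id x) (map (tree_act act h \<sigma>) ts)"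
  by (simp add: tree_act_def)

lemma leaves_tree_act: "set (leaves (tree_act act h \<sigma> t)) = \<sigma> ` set (leaves t)"
  by (simp add: tree_act_def leaves_tree_relabel)

lemma leaves_graft: "leaves (graft t f) = concat (map (\<lambda>i. leaves (f i)) (leaves t))"
proof (induction t)
  case (Node x ts)
  have "concat (map (\<lambda>t. concat (map (\<lambda>i. leaves (f i)) (leaves t))) ts)
      = concat (map (\<lambda>i. leaves (f i)) (concat (map leaves ts)))"
    by (induction ts) auto
  then show ?case using Node by (simp cong: map_cong)
qed simp

lemma labels_ok_graft:
  "labels_ok S t \<Longrightarrow> (\<And>i. i \<in> set (leaves t) \<Longrightarrow> labels_ok S (f i)) \<Longrightarrow> labels_ok S (graft t f)"
  by (induction t) auto

lemma tree_relabel_graft: "tree_relabel \<sigma> (graft t f) = graft t (tree_relabel \<sigma> \<circ> f)"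
  by (induction t) auto

lemma graft_tree_relabel: "graft (tree_relabel \<tau> t) f = graft t (f \<circ> \<tau>)"
  by (induction t) auto

lemma tree_gact_graft: "tree_gact act g (graft t f) = graft (tree_gact act g t) (tree_gact act g \<circ> f)"
  by (induction t) auto

lemma tree_act_graft:
  "tree_act act g \<sigma> (graft t f) = graft (tree_gact act g t) (tree_act act g \<sigma> \<circ> f)"
  by (simp add: tree_act_def tree_gact_graft tree_relabel_graft comp_def)

lemma tree_act_tree_relabel:
  "(\<And>i. i \<in> set (leaves t) \<Longrightarrow> \<sigma> (g i) = g' (\<tau> i)) \<Longrightarrow>
   tree_act act h \<sigma> (tree_relabel g t) = tree_relabel g' (tree_act act h \<tau> t)"
  unfolding tree_act_def tree_gact_tree_relabel tree_relabel_tree_relabel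
  by (rule tree_relabel_cong) simp

lemma distinct_concat_map:
  "distinct xs \<Longrightarrow> (\<forall>x\<in>set xs. distinct (F x)) \<Longrightarrow>
   (\<forall>x\<in>set xs. \<forall>y\<in>set xs. x \<noteq> y \<longrightarrow> set (F x) \<inter> set (F y) = {}) \<Longrightarrow> distinct (concat (map F xs))"
  by (induction xs) auto

lemma distinct_concat_nth_disjoint:
  "distinct (concat xs) \<Longrightarrow> i < length xs \<Longrightarrow> j < length xs \<Longrightarrow> i \<noteq> j \<Longrightarrow> set (xs ! i) \<inter> set (xs ! j) = {}"
proof (induction xs arbitrary: i j)
  case Nil then show ?case by simp
next
  case (Cons a xs)
  show ?case
  proof (cases i)
    case 0
    then obtain j' where j: "j = Suc j'" using Cons.prems(4) by (cases j) auto
    have m: "xs ! j' \<in> set xs" using Cons.prems(3) j by simp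
    have "set (xs ! j') \<subseteq> set (concat xs)" using m by auto
    then show ?thesis using Cons.prems(1) 0 j by auto
  next
    case (Suc i')
    show ?thesis
    proof (cases j)
      case 0
      have m: "xs ! i' \<in> set xs" using Cons.prems(2) Suc by simp
      have "set (xs ! i') \<subseteq> set (concat xs)" using m by auto
      then show ?thesis using Cons.prems(1) 0 Suc by auto
    next
      case (Suc j')
      then show ?thesis using Cons \<open>i = Suc i'\<close> by auto
    qed
  qed
qed

lemma fo_wf_graft:
  assumes "labels_ok S t" and "distinct (leaves t)"
    and "\<forall>i\<in>set (leaves t). labels_ok S (F i) \<and> distinct (leaves (F i))"
    and "\<forall>i\<in>set (leaves t). \<forall>i'\<in>set (leaves t). i \<noteq> i' \<longrightarrow> set (leaves (F i)) \<inter> set (leaves (F i')) = {}"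
    and "(\<Union>i\<in>set (leaves t). set (leaves (F i))) = {..<N}"
  shows "fo_wf S N (graft t F)"
  using assms labels_ok_graft[of S t F] distinct_concat_map[of "leaves t" "\<lambda>i. leaves (F i)"]
  by (simp add: fo_wf_def leaves_graft)

context symseq_action
begin

lemma labels_ok_tree_gact: "g \<in> carrier G \<Longrightarrow> labels_ok S t \<Longrightarrow> labels_ok S (tree_gact act g t)"
  by (induction t) (auto intro: act_closed)

lemma tree_gact_tree_gact:
  "g \<in> carrier G \<Longrightarrow> g' \<in> carrier G \<Longrightarrow> labels_ok S t \<Longrightarrow>
   tree_gact act g (tree_gact act g' t) = tree_gact act (g \<otimes> g') t"
  by (induction t) (auto simp: act_comp[of _ _ g g' id id, simplified])

lemma tree_iso_leaves: "tree_iso t u \<Longrightarrow> set (leaves t) = set (leaves u)"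
proof (induction rule: tree_iso.induct)
  case (tree_iso_Node ts us \<pi> x y)
  have "(\<lambda>i. ts ! \<pi> i) ` {..<length us} = (\<lambda>i. ts ! i) ` (\<pi> ` {..<length us})"
    by auto
  then have "set ts = (\<lambda>i. ts ! \<pi> i) ` {..<length us}"
    using tree_iso_Node(1) permutes_image[OF tree_iso_Node(2)] by (auto simp: set_conv_nth)
  moreover have "set us = (\<lambda>i. us ! i) ` {..<length us}"
    by (auto simp: in_set_conv_nth)
  ultimately show ?case using tree_iso_Node(4) by auto
qed simp

lemma tree_iso_relabel: "tree_iso t u \<Longrightarrow> tree_iso (tree_relabel \<sigma> t) (tree_relabel \<sigma> u)"
proof (induction rule: tree_iso.induct)
  case (tree_iso_Node ts us \<pi> x y)
  then show ?case
    by (simp, intro tree_iso.tree_iso_Node[of _ _ \<pi>])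
      (use tree_iso_Node permutes_in_image[OF tree_iso_Node(2)] in auto)
qed (simp add: tree_iso.tree_iso_Leaf)

lemma vertex_rel_gact:
  assumes g: "g \<in> carrier G" and \<pi>: "\<pi> permutes {..<k}" and rel: "vertex_rel k \<pi> x y"
  shows "vertex_rel k \<pi> (act k g id x) (act k g id y)"
proof (cases "\<pi> = id \<and> x = y")
  case False
  with rel have y: "y \<in> S k" and x: "x = act k \<one> \<pi> y"
    by (auto simp: vertex_rel_def)
  have "act k g id x = act k \<one> \<pi> (act k g id y)"
    using x act_comp[OF y g one_closed permutes_id \<pi>] act_comp[OF y one_closed g \<pi> permutes_id] g
    by simp
  then show ?thesis using act_closed[OF y g permutes_id] by (simp add: vertex_rel_def)
qed (simp add: vertex_rel_def)

lemma tree_iso_gact: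
  "tree_iso t u \<Longrightarrow> g \<in> carrier G \<Longrightarrow> tree_iso (tree_gact act g t) (tree_gact act g u)"
proof (induction rule: tree_iso.induct)
  case (tree_iso_Node ts us \<pi> x y)
  then show ?case
    by (simp, intro tree_iso.tree_iso_Node[of _ _ \<pi>])
      (use tree_iso_Node vertex_rel_gact permutes_in_image[OF tree_iso_Node(2)] in auto)
qed (simp add: tree_iso.tree_iso_Leaf)

lemma tree_iso_graft_left: "tree_iso t u \<Longrightarrow> tree_iso (graft t f) (graft u f)"
proof (induction rule: tree_iso.induct)
  case (tree_iso_Node ts us \<pi> x y)
  then show ?case
    by (simp, intro tree_iso.tree_iso_Node[of _ _ \<pi>])
      (use tree_iso_Node permutes_in_image[OF tree_iso_Node(2)] in auto)
qed (simp add: tree_iso_refl)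

lemma tree_iso_graft_right:
  "\<forall>i\<in>set (leaves t). tree_iso (f i) (f' i) \<Longrightarrow> tree_iso (graft t f) (graft t f')"
proof (induction t)
  case (Node x ts)
  then show ?case
    by (simp, intro tree_iso.tree_iso_Node[of _ _ id]) (use Node in \<open>auto simp: vertex_rel_refl\<close>)
qed simp

end

section \<open>Freeness and fixed points of the free operad\<close>

locale sigma_free_symseq = symseq_action +
  assumes levels_free: "levels_sigma_free G S act"
begin

lemma act_free: "x \<in> S k \<Longrightarrow> \<sigma> permutes {..<k} \<Longrightarrow> act k \<one> \<sigma> x = x \<Longrightarrow> \<sigma> = id"
  using levels_free unfolding levels_sigma_free_def by blast

lemma tree_iso_relabel_imp_fixes_leaves:
  "labels_ok S t \<Longrightarrow> tree_iso (tree_relabel \<sigma> t) t \<Longrightarrow> i \<in> set (leaves t) \<Longrightarrow> \<sigma> i = i"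
proof (induction t)
  case (Leaf j)
  then show ?case by (auto elim: tree_iso.cases)
next
  case (Node x ts)
  from Node.prems(2) obtain \<pi> where \<pi>: "\<pi> permutes {..<length ts}"
    and rel: "vertex_rel (length ts) \<pi> x x"
    and children: "\<forall>i<length ts. tree_iso (map (tree_relabel \<sigma>) ts ! \<pi> i) (ts ! i)"
    by (cases rule: tree_iso.cases) auto
  have "\<pi> = id" using rel act_free \<pi> Node.prems(1) by (auto simp: vertex_rel_def)
  with children have "\<forall>t\<in>set ts. tree_iso (tree_relabel \<sigma> t) t"
    by (auto simp: in_set_conv_nth)
  moreover obtain t where "t \<in> set ts" "i \<in> set (leaves t)"
    using Node.prems(3) by auto
  ultimately show ?case using Node.IH Node.prems(1) by simp
qed

lemma sigma_free: "fo_sigma_free G S act"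
  unfolding fo_sigma_free_def
proof (intro allI impI)
  fix n t \<sigma>
  assume wf: "fo_wf S n t" and \<sigma>: "\<sigma> permutes {..<n}" and eq: "tree_eq G S act (tree_relabel \<sigma> t) t"
  have "\<sigma> i = i" if "i < n" for i
    using tree_iso_relabel_imp_fixes_leaves that wf eq tree_eq_iff_tree_iso by (auto simp: fo_wf_def)
  moreover have "\<sigma> i = i" if "\<not> i < n" for i
    using permutes_not_in[OF \<sigma>] that by simp
  ultimately show "\<sigma> = id" by (auto simp: fun_eq_iff)
qed

lemma act_fixing_perm_unique:
  assumes x: "x \<in> S k" and h: "h \<in> carrier G"
    and \<sigma>: "\<sigma> permutes {..<k}" and \<sigma>': "\<sigma>' permutes {..<k}"
    and fix\<sigma>: "act k h \<sigma> x = x" and fix\<sigma>': "act k h \<sigma>' x = x"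
  shows "\<sigma> = \<sigma>'"
proof -
  have inv\<sigma>: "pinv \<sigma> permutes {..<k}" using permutes_inv[OF \<sigma>] .
  have inv_fix: "act k (inv h) (pinv \<sigma>) x = x"
    using act_comp[OF x inv_closed[OF h] h inv\<sigma> \<sigma>] fix\<sigma> h permutes_inv_o(2)[OF \<sigma>] act_one[OF x]
    by simp
  have "act k (inv h \<otimes> h) (pinv \<sigma> \<circ> \<sigma>') x = x"
    using act_comp[OF x inv_closed[OF h] h inv\<sigma> \<sigma>'] fix\<sigma>' inv_fix by simp
  then have "pinv \<sigma> \<circ> \<sigma>' = id"
    using act_free[OF x permutes_compose[OF \<sigma>' inv\<sigma>]] h by simp
  then have "\<sigma> \<circ> (pinv \<sigma> \<circ> \<sigma>') = \<sigma>" by simp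
  then show ?thesis using permutes_inv_o(1)[OF \<sigma>] by (simp add: o_assoc)
qed

end

fun comb :: "'x \<Rightarrow> nat \<Rightarrow> nat \<Rightarrow> 'x ftree" where
  "comb y 0 k = Leaf k"
| "comb y (Suc m) k = Node y [Leaf k, comb y m (Suc k)]"

lemma leaves_comb: "leaves (comb y m k) = [k..<k + m + 1]"
  by (induction m arbitrary: k) (auto simp: upt_rec)

lemma labels_ok_comb: "y \<in> S 2 \<Longrightarrow> labels_ok S (comb y m k)"
  by (induction m arbitrary: k) (auto simp: numeral_2_eq_2)

lemma tree_gact_comb: "act 2 g id y = y \<Longrightarrow> tree_gact act g (comb y m k) = comb y m k"
  by (induction m arbitrary: k) (auto simp: numeral_2_eq_2)

locale symseq_with_fixed_points = symseq_action +
  assumes fixed0: "level_has_G_fixed G S act 0"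
    and fixed2: "level_has_G_fixed G S act 2"
begin

lemma G_fixed_tree: "\<exists>t. fo_wf S n t \<and> (\<forall>g\<in>carrier G. tree_gact act g t = t)"
proof (cases n)
  case 0
  from fixed0 obtain z where "z \<in> S 0" "\<forall>g\<in>carrier G. act 0 g id z = z"
    by (auto simp: level_has_G_fixed_def)
  then show ?thesis using 0 by (intro exI[of _ "Node z []"]) (auto simp: fo_wf_def)
next
  case (Suc m)
  from fixed2 obtain y where "y \<in> S 2" "\<forall>g\<in>carrier G. act 2 g id y = y"
    by (auto simp: level_has_G_fixed_def)
  then show ?thesis using Suc
    by (intro exI[of _ "comb y m 0"]) (auto simp: fo_wf_def leaves_comb labels_ok_comb tree_gact_comb)
qed

lemma has_G_fixed: "fo_has_G_fixed G S act n"
  using G_fixed_tree unfolding fo_has_G_fixed_def by (metis te_refl)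

end

section \<open>Finite H-sets\<close>

definition transfer_action :: "(nat \<Rightarrow> 'a) \<Rightarrow> nat \<Rightarrow> 'g set \<Rightarrow> ('g \<Rightarrow> 'a \<Rightarrow> 'a) \<Rightarrow> 'g \<Rightarrow> nat \<Rightarrow> nat"
  where "transfer_action e c H \<rho> =
    (\<lambda>h. if h \<in> H then (\<lambda>i. if i < c then the_inv_into {..<c} e (\<rho> h (e i)) else i) else id)"

lemma transfer_action_apply:
  "h \<in> H \<Longrightarrow> i < c \<Longrightarrow> transfer_action e c H \<rho> h i = the_inv_into {..<c} e (\<rho> h (e i))"
  by (simp add: transfer_action_def)

lemma bij_betw_lessThan_inverse:
  assumes "bij_betw e {..<c} L"
  shows "\<And>y. y \<in> L \<Longrightarrow> e (the_inv_into {..<c} e y) = y"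
    and "\<And>y. y \<in> L \<Longrightarrow> the_inv_into {..<c} e y < c"
    and "\<And>i. i < c \<Longrightarrow> the_inv_into {..<c} e (e i) = i"
    and "\<And>i. i < c \<Longrightarrow> e i \<in> L"
proof -
  have inj: "inj_on e {..<c}" and im: "e ` {..<c} = L"
    using assms by (auto simp: bij_betw_def)
  show "\<And>y. y \<in> L \<Longrightarrow> e (the_inv_into {..<c} e y) = y"
    using f_the_inv_into_f[OF inj] im by auto
  show "\<And>y. y \<in> L \<Longrightarrow> the_inv_into {..<c} e y < c"
    using the_inv_into_into[OF inj] im by (metis lessThan_iff subset_refl)
  show "\<And>i. i < c \<Longrightarrow> the_inv_into {..<c} e (e i) = i"
    using the_inv_into_f_f[OF inj] by simp
  show "\<And>i. i < c \<Longrightarrow> e i \<in> L"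
    using im by auto
qed

definition hset_sum :: "'g set \<Rightarrow> nat \<Rightarrow> ('g \<Rightarrow> nat \<Rightarrow> nat) \<Rightarrow> nat \<Rightarrow> ('g \<Rightarrow> nat \<Rightarrow> nat)
    \<Rightarrow> 'g \<Rightarrow> nat \<Rightarrow> nat" where
  "hset_sum H n \<rho> m \<rho>' = (\<lambda>h. if h \<in> H then (\<lambda>i. if i < n then \<rho> h i
      else if i < n + m then n + \<rho>' h (i - n) else i) else id)"

definition hset_prod :: "'g set \<Rightarrow> nat \<Rightarrow> ('g \<Rightarrow> nat \<Rightarrow> nat) \<Rightarrow> nat \<Rightarrow> ('g \<Rightarrow> nat \<Rightarrow> nat)
    \<Rightarrow> 'g \<Rightarrow> nat \<Rightarrow> nat" where
  "hset_prod H n \<rho> m \<rho>' = (\<lambda>h. if h \<in> H then (\<lambda>i. if i < n * m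
      then \<rho> h (i div m) * m + \<rho>' h (i mod m) else i) else id)"

lemma mult_add_less: "a < (n::nat) \<Longrightarrow> b < m \<Longrightarrow> a * m + b < n * m"
proof -
  assume "a < n" "b < m"
  then have "a * m + b < (a + 1) * m" by simp
  also have "\<dots> \<le> n * m" using \<open>a < n\<close> by (intro mult_right_mono) auto
  finally show ?thesis .
qed

lemma mult_add_div_mod: "b < (m::nat) \<Longrightarrow> (a * m + b) div m = a \<and> (a * m + b) mod m = b"
  by simp

lemma div_mod_less: "i < n * (m::nat) \<Longrightarrow> i div m < n \<and> i mod m < m"
proof -
  assume i: "i < n * m"
  then have "m > 0" by (cases m) auto
  then show ?thesis using i by (simp add: less_mult_imp_div_less mult.commute)
qed

context group
begin

definition action_on :: "'a set \<Rightarrow> 'c set \<Rightarrow> ('a \<Rightarrow> 'c \<Rightarrow> 'c) \<Rightarrow> bool" where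
  "action_on H L \<rho> \<longleftrightarrow> (\<forall>h\<in>H. \<forall>x\<in>L. \<rho> h x \<in> L) \<and>
     (\<forall>h\<in>H. \<forall>h'\<in>H. \<forall>x\<in>L. \<rho> (h \<otimes> h') x = \<rho> h (\<rho> h' x)) \<and> (\<forall>x\<in>L. \<rho> \<one> x = x)"

lemma action_on_closed: "action_on H L \<rho> \<Longrightarrow> h \<in> H \<Longrightarrow> x \<in> L \<Longrightarrow> \<rho> h x \<in> L"
  unfolding action_on_def by blast

lemma action_on_mult:
  "action_on H L \<rho> \<Longrightarrow> h \<in> H \<Longrightarrow> h' \<in> H \<Longrightarrow> x \<in> L \<Longrightarrow> \<rho> (h \<otimes> h') x = \<rho> h (\<rho> h' x)"
  unfolding action_on_def by blast

lemma action_on_subset: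
  "action_on H L \<rho> \<Longrightarrow> K \<subseteq> H \<Longrightarrow> L' \<subseteq> L \<Longrightarrow> (\<forall>k\<in>K. \<forall>x\<in>L'. \<rho> k x \<in> L') \<Longrightarrow>
   \<one> \<in> K \<Longrightarrow> action_on K L' \<rho>"
  unfolding action_on_def by blast

lemma action_on_Un: "action_on H A \<rho> \<Longrightarrow> action_on H B \<rho> \<Longrightarrow> action_on H (A \<union> B) \<rho>"
  unfolding action_on_def by blast

lemma action_on_inv_apply:
  assumes a: "action_on H L \<rho>" and H: "subgroup H G" and h: "h \<in> H" and x: "x \<in> L"
  shows "\<rho> (inv h) (\<rho> h x) = x"
proof -
  have "\<rho> (inv h) (\<rho> h x) = \<rho> (inv h \<otimes> h) x"
    using action_on_mult[OF a subgroup.m_inv_closed[OF H h] h x] by simp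
  then show ?thesis using a x subgroup.mem_carrier[OF H h] by (simp add: action_on_def)
qed

lemma action_on_inj:
  assumes "action_on H L \<rho>" "subgroup H G" "h \<in> H"
  shows "inj_on (\<rho> h) L"
proof (rule inj_onI)
  fix x y assume "x \<in> L" "y \<in> L" "\<rho> h x = \<rho> h y"
  then show "x = y" using action_on_inv_apply[OF assms] by metis
qed

lemma fhset_subgroup: "fhset G H n \<rho> \<Longrightarrow> subgroup H G"
  by (simp add: fhset_def)

lemma fhset_permutes: "fhset G H n \<rho> \<Longrightarrow> h \<in> H \<Longrightarrow> \<rho> h permutes {..<n}"
  by (simp add: fhset_def)

lemma fhset_less: "fhset G H n \<rho> \<Longrightarrow> h \<in> H \<Longrightarrow> i < n \<Longrightarrow> \<rho> h i < n"
  using fhset_permutes permutes_in_image by fastforce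

lemma fhset_mult: "fhset G H n \<rho> \<Longrightarrow> h \<in> H \<Longrightarrow> h' \<in> H \<Longrightarrow> \<rho> (h \<otimes> h') = \<rho> h \<circ> \<rho> h'"
  by (simp add: fhset_def)

lemma fhset_one:
  assumes "fhset G H n \<rho>"
  shows "\<rho> \<one> = id"
proof -
  have one: "\<one> \<in> H" using subgroup.one_closed[OF fhset_subgroup[OF assms]] .
  have "\<rho> \<one> \<circ> \<rho> \<one> = \<rho> \<one>" using fhset_mult[OF assms one one] by simp
  then have "pinv (\<rho> \<one>) \<circ> (\<rho> \<one> \<circ> \<rho> \<one>) = pinv (\<rho> \<one>) \<circ> \<rho> \<one>" by simp
  then show ?thesis using permutes_inv_o(2)[OF fhset_permutes[OF assms one]] by (simp add: o_assoc)
qed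

lemma fhset_action_on: "fhset G H n \<rho> \<Longrightarrow> action_on H {..<n} \<rho>"
  unfolding action_on_def using fhset_less fhset_mult fhset_one by simp

lemma fhset_inv_apply: "fhset G H n \<rho> \<Longrightarrow> h \<in> H \<Longrightarrow> i < n \<Longrightarrow> \<rho> (inv h) (\<rho> h i) = i"
  using action_on_inv_apply[OF fhset_action_on fhset_subgroup] by blast

lemma fhset_transfer_action:
  assumes H: "subgroup H G" and e: "bij_betw e {..<c} L" and a: "action_on H L \<rho>"
  shows "fhset G H c (transfer_action e c H \<rho>)"
proof -
  note E = bij_betw_lessThan_inverse[OF e]
  have into: "\<rho> h (e i) \<in> L" if "h \<in> H" "i < c" for h i
    using action_on_closed[OF a] E(4) that by blast
  have perm: "transfer_action e c H \<rho> h permutes {..<c}" if h: "h \<in> H" for h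
  proof (rule inj_imp_permutes)
    show "inj_on (transfer_action e c H \<rho> h) {..<c}"
    proof (rule inj_onI)
      fix i j assume i: "i \<in> {..<c}" and j: "j \<in> {..<c}"
        and eq: "transfer_action e c H \<rho> h i = transfer_action e c H \<rho> h j"
      have "e (the_inv_into {..<c} e (\<rho> h (e i))) = e (the_inv_into {..<c} e (\<rho> h (e j)))"
        using eq h i j by (simp add: transfer_action_apply)
      then have "\<rho> h (e i) = \<rho> h (e j)"
        using E(1)[OF into[OF h]] i j by simp
      then have "e i = e j"
        using inj_onD[OF action_on_inj[OF a H h]] E(4) i j by simp
      then show "i = j"
        using inj_onD[OF bij_betw_imp_inj_on[OF e]] i j by simp
    qed
  qed (use h E(2) into in \<open>auto simp: transfer_action_def\<close>)
  have mult: "transfer_action e c H \<rho> (h \<otimes> h') = transfer_action e c H \<rho> h \<circ> transfer_action e c H \<rho> h'"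
    if h: "h \<in> H" "h' \<in> H" for h h'
  proof
    fix i
    have hh: "h \<otimes> h' \<in> H" using subgroup.m_closed[OF H h] .
    show "transfer_action e c H \<rho> (h \<otimes> h') i = (transfer_action e c H \<rho> h \<circ> transfer_action e c H \<rho> h') i"
    proof (cases "i < c")
      case True
      have "\<rho> (h \<otimes> h') (e i) = \<rho> h (\<rho> h' (e i))"
        using action_on_mult[OF a h E(4)[OF True]] .
      then show ?thesis using True h hh E into by (simp add: transfer_action_apply)
    qed (use h hh in \<open>simp add: transfer_action_def\<close>)
  qed
  have "transfer_action e c H \<rho> h = id" if "h \<notin> H" for h
    using that by (simp add: transfer_action_def)
  then show ?thesis unfolding fhset_def using H perm mult by blast
qed

lemma transfer_action_id:
  assumes "fhset G H n \<rho>"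
  shows "transfer_action id n H \<rho> = \<rho>"
proof (intro ext)
  fix h i
  show "transfer_action id n H \<rho> h i = \<rho> h i"
  proof (cases "h \<in> H \<and> i < n")
    case True
    then show ?thesis using fhset_less[OF assms] by (simp add: transfer_action_def the_inv_into_f_eq)
  next
    case False
    then show ?thesis
    proof (cases "h \<in> H")
      case True
      with False show ?thesis
        using permutes_not_in[OF fhset_permutes[OF assms True]] by (simp add: transfer_action_def)
    qed (use assms in \<open>simp add: transfer_action_def fhset_def\<close>)
  qed
qed

lemma fhset_hset_sum:
  assumes \<rho>: "fhset G H n \<rho>" and \<rho>': "fhset G H m \<rho>'"
  shows "fhset G H (n + m) (hset_sum H n \<rho> m \<rho>')"
proof -
  let ?\<sigma> = "hset_sum H n \<rho> m \<rho>'"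
  have H: "subgroup H G" using fhset_subgroup[OF \<rho>] .
  have perm: "?\<sigma> h permutes {..<n + m}" if h: "h \<in> H" for h
  proof (rule inj_imp_permutes)
    have inj: "inj (\<rho> h)" "inj (\<rho>' h)"
      using permutes_inj fhset_permutes[OF \<rho> h] fhset_permutes[OF \<rho>' h] by auto
    show "inj_on (?\<sigma> h) {..<n + m}"
    proof (rule inj_onI)
      fix i j assume "i \<in> {..<n + m}" "j \<in> {..<n + m}" "?\<sigma> h i = ?\<sigma> h j"
      then show "i = j"
        using h inj fhset_less[OF \<rho> h, of i] fhset_less[OF \<rho> h, of j]
        by (cases "i < n"; cases "j < n") (auto simp: hset_sum_def inj_eq)
    qed
  qed (use h fhset_less[OF \<rho> h] fhset_less[OF \<rho>' h] in \<open>auto simp: hset_sum_def trans_less_add1\<close>)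
  have mult: "?\<sigma> (h \<otimes> h') i = ?\<sigma> h (?\<sigma> h' i)" if h: "h \<in> H" "h' \<in> H" for h h' i
    using h subgroup.m_closed[OF H h] fhset_less[OF \<rho> h(2), of i] fhset_less[OF \<rho>' h(2), of "i - n"]
      fhset_mult[OF \<rho> h] fhset_mult[OF \<rho>' h]
    by (auto simp: hset_sum_def)
  have "?\<sigma> h = id" if "h \<notin> H" for h
    using that by (simp add: hset_sum_def)
  then show ?thesis
    unfolding fhset_def using H perm mult by (simp add: fun_eq_iff)
qed

lemma hset_prod_apply:
  assumes \<rho>: "fhset G H n \<rho>" and \<rho>': "fhset G H m \<rho>'" and h: "h \<in> H" and i: "i < n * m"
  shows "hset_prod H n \<rho> m \<rho>' h i = \<rho> h (i div m) * m + \<rho>' h (i mod m)"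
    and "\<rho> h (i div m) < n" and "\<rho>' h (i mod m) < m"
  using h i div_mod_less[OF i] fhset_less[OF \<rho> h] fhset_less[OF \<rho>' h] by (auto simp: hset_prod_def)

lemma fhset_hset_prod:
  assumes \<rho>: "fhset G H n \<rho>" and \<rho>': "fhset G H m \<rho>'"
  shows "fhset G H (n * m) (hset_prod H n \<rho> m \<rho>')"
proof -
  let ?\<sigma> = "hset_prod H n \<rho> m \<rho>'"
  note prod_apply = hset_prod_apply[OF \<rho> \<rho>']
  have H: "subgroup H G" using fhset_subgroup[OF \<rho>] .
  have perm: "?\<sigma> h permutes {..<n * m}" if h: "h \<in> H" for h
  proof (rule inj_imp_permutes)
    have inj: "inj (\<rho> h)" "inj (\<rho>' h)"
      using permutes_inj fhset_permutes[OF \<rho> h] fhset_permutes[OF \<rho>' h] by auto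
    show "inj_on (?\<sigma> h) {..<n * m}"
    proof (rule inj_onI)
      fix i j assume i: "i \<in> {..<n * m}" and j: "j \<in> {..<n * m}" and eq: "?\<sigma> h i = ?\<sigma> h j"
      have "\<rho> h (i div m) = \<rho> h (j div m) \<and> \<rho>' h (i mod m) = \<rho>' h (j mod m)"
        using eq prod_apply[OF h] i j mult_add_div_mod by (metis lessThan_iff)
      then have "i div m = j div m" "i mod m = j mod m"
        using inj by (simp_all add: inj_eq)
      then show "i = j" by (metis div_mult_mod_eq)
    qed
  qed (use h prod_apply[OF h] mult_add_less in \<open>auto simp: hset_prod_def\<close>)
  have mult: "?\<sigma> (h \<otimes> h') i = ?\<sigma> h (?\<sigma> h' i)" if h: "h \<in> H" "h' \<in> H" for h h' i
  proof (cases "i < n * m")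
    case True
    have "?\<sigma> h' i < n * m" using prod_apply[OF h(2) True] mult_add_less by simp
    then show ?thesis
      using prod_apply[OF h(2) True] prod_apply[OF h(1)] prod_apply[OF subgroup.m_closed[OF H h] True]
        fhset_mult[OF \<rho> h] fhset_mult[OF \<rho>' h] by simp
  qed (use h subgroup.m_closed[OF H h] in \<open>simp add: hset_prod_def\<close>)
  have "?\<sigma> h = id" if "h \<notin> H" for h
    using that by (simp add: hset_prod_def)
  then show ?thesis
    unfolding fhset_def using H perm mult by (simp add: fun_eq_iff)
qed

lemma inv_mult_cancel_left: "x \<in> carrier G \<Longrightarrow> y \<in> carrier G \<Longrightarrow> inv x \<otimes> (x \<otimes> y) = y"
  by (simp add: m_assoc[symmetric])

lemma conjugate_back: "g \<in> carrier G \<Longrightarrow> k \<in> carrier G \<Longrightarrow> inv g \<otimes> (g \<otimes> k \<otimes> inv g) \<otimes> g = k"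
  by (simp add: m_assoc inv_mult_cancel_left)

lemma conjugate_mult: "g \<in> carrier G \<Longrightarrow> k \<in> carrier G \<Longrightarrow> k' \<in> carrier G \<Longrightarrow>
  g \<otimes> k \<otimes> inv g \<otimes> (g \<otimes> k' \<otimes> inv g) = g \<otimes> (k \<otimes> k') \<otimes> inv g"
  by (simp add: m_assoc inv_mult_cancel_left)

lemma subgroup_conjugate:
  assumes H: "subgroup H G" and g: "g \<in> carrier G"
  shows "subgroup ((\<lambda>h. g \<otimes> h \<otimes> inv g) ` H) G"
proof (rule subgroupI)
  have Hc: "\<And>k. k \<in> H \<Longrightarrow> k \<in> carrier G" using subgroup.mem_carrier[OF H] .
  show "(\<lambda>h. g \<otimes> h \<otimes> inv g) ` H \<subseteq> carrier G" using g Hc by auto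
  show "(\<lambda>h. g \<otimes> h \<otimes> inv g) ` H \<noteq> {}" using subgroup.one_closed[OF H] by blast
  show "inv a \<in> (\<lambda>h. g \<otimes> h \<otimes> inv g) ` H" if "a \<in> (\<lambda>h. g \<otimes> h \<otimes> inv g) ` H" for a
  proof -
    from that obtain k where k: "k \<in> H" "a = g \<otimes> k \<otimes> inv g" by auto
    then have "inv a = g \<otimes> inv k \<otimes> inv g" using g Hc by (simp add: inv_mult_group m_assoc)
    then show ?thesis using subgroup.m_inv_closed[OF H k(1)] by blast
  qed
  show "a \<otimes> b \<in> (\<lambda>h. g \<otimes> h \<otimes> inv g) ` H"
    if "a \<in> (\<lambda>h. g \<otimes> h \<otimes> inv g) ` H" "b \<in> (\<lambda>h. g \<otimes> h \<otimes> inv g) ` H" for a b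
    using that conjugate_mult g Hc subgroup.m_closed[OF H] by auto
qed

lemma fhset_conjugate:
  assumes \<rho>: "fhset G H n \<rho>" and g: "g \<in> carrier G"
  defines "H' \<equiv> (\<lambda>h. g \<otimes> h \<otimes> inv g) ` H"
  shows "fhset G H' n (\<lambda>h. if h \<in> H' then \<rho> (inv g \<otimes> h \<otimes> g) else id)"
proof -
  have H: "subgroup H G" using fhset_subgroup[OF \<rho>] .
  have Hc: "\<And>k. k \<in> H \<Longrightarrow> k \<in> carrier G" using subgroup.mem_carrier[OF H] .
  have "\<rho> (inv g \<otimes> (g \<otimes> k \<otimes> inv g \<otimes> (g \<otimes> k' \<otimes> inv g)) \<otimes> g) = \<rho> k \<circ> \<rho> k'"
    if "k \<in> H" "k' \<in> H" for k k'
    using that conjugate_mult[OF g Hc Hc] conjugate_back[OF g] Hc fhset_mult[OF \<rho>]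
      subgroup.m_closed[OF H] by simp
  then show ?thesis
    unfolding fhset_def H'_def
    using subgroup_conjugate[OF H g] conjugate_back[OF g] Hc fhset_permutes[OF \<rho>]
      subgroup.m_closed[OF subgroup_conjugate[OF H g]]
    by (auto simp: H'_def)
qed

end

lemma UN_mult_add_lessThan: "(\<Union>i<n. (\<lambda>j. i * m + j) ` {..<m}) = {..<n * (m::nat)}"
proof
  show "(\<Union>i<n. (\<lambda>j. i * m + j) ` {..<m}) \<subseteq> {..<n * m}" using mult_add_less by auto
  show "{..<n * m} \<subseteq> (\<Union>i<n. (\<lambda>j. i * m + j) ` {..<m})"
  proof
    fix x assume "x \<in> {..<n * m}"
    then have "x = x div m * m + x mod m" "x div m < n" "x mod m < m"
      using div_mod_less by auto
    then show "x \<in> (\<Union>i<n. (\<lambda>j. i * m + j) ` {..<m})" by blast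
  qed
qed

lemma fo_wf_graft_prod:
  assumes wf: "fo_wf S n t" and wf': "fo_wf S m t'"
  shows "fo_wf S (n * m) (graft t (\<lambda>i. tree_relabel (\<lambda>j. i * m + j) t'))"
proof (rule fo_wf_graft)
  let ?F = "\<lambda>i. tree_relabel (\<lambda>j. i * m + j) t'"
  have leaves_F: "set (leaves (?F i)) = (\<lambda>j. i * m + j) ` {..<m}" for i
    using wf' by (simp add: leaves_tree_relabel fo_wf_def)
  show "\<forall>i\<in>set (leaves t). labels_ok S (?F i) \<and> distinct (leaves (?F i))"
    using wf' by (auto simp: fo_wf_def leaves_tree_relabel distinct_map inj_on_def)
  have "i * m + j \<noteq> i' * m + j'" if "i \<noteq> i'" "j < m" "j' < m" for i i' j j'
    using mult_add_div_mod[OF that(2), of i] mult_add_div_mod[OF that(3), of i'] that(1) by metis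
  then show "\<forall>i\<in>set (leaves t). \<forall>i'\<in>set (leaves t). i \<noteq> i' \<longrightarrow> set (leaves (?F i)) \<inter> set (leaves (?F i')) = {}"
    unfolding leaves_F by blast
  show "(\<Union>i\<in>set (leaves t). set (leaves (?F i))) = {..<n * m}"
    using wf UN_mult_add_lessThan unfolding leaves_F by (simp add: fo_wf_def)
qed (use wf in \<open>simp_all add: fo_wf_def\<close>)

section \<open>The admissible sets of the free operad form an indexing system\<close>

context symseq_action
begin

lemma tree_iso_tree_act_graft:
  assumes "tree_iso (tree_act act h \<rho> t) t"
    and "\<forall>i\<in>set (leaves t). tree_iso (tree_act act h \<sigma> (F i)) (F (\<rho> i))"
  shows "tree_iso (tree_act act h \<sigma> (graft t F)) (graft t F)"
proof -
  have "tree_iso (tree_act act h \<sigma> (graft t F)) (graft (tree_gact act h t) (F \<circ> \<rho>))"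
    unfolding tree_act_graft using assms(2) by (intro tree_iso_graft_right) simp
  also have "graft (tree_gact act h t) (F \<circ> \<rho>) = graft (tree_act act h \<rho> t) F"
    by (simp add: tree_act_def graft_tree_relabel)
  finally show ?thesis
    using tree_iso_trans tree_iso_graft_left[OF assms(1)] by blast
qed

definition tree_fixed :: "'g set \<Rightarrow> ('g \<Rightarrow> nat \<Rightarrow> nat) \<Rightarrow> 'x ftree \<Rightarrow> bool" where
  "tree_fixed H \<rho> t \<longleftrightarrow> (\<forall>h\<in>H. tree_iso (tree_act act h (\<rho> h) t) t)"

lemma adm_fo_iff:
  "(H, n, \<rho>) \<in> adm_fo G S act \<longleftrightarrow> fhset G H n \<rho> \<and> (\<exists>t. fo_wf S n t \<and> tree_fixed H \<rho> t)"
  unfolding adm_fo_def tree_fixed_def by (simp add: tree_eq_iff_tree_iso)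

lemma adm_seq_subset_adm_fo: "adm_seq G S act \<subseteq> adm_fo G S act"
proof
  fix T assume "T \<in> adm_seq G S act"
  then obtain H n \<rho> x where T: "T = (H, n, \<rho>)" and \<rho>: "fhset G H n \<rho>" and x: "x \<in> S n"
    and fixed: "\<forall>h\<in>H. act n h (\<rho> h) x = x"
    unfolding adm_seq_def by auto
  define t where "t = Node x (map Leaf [0..<n])"
  have "leaves t = [0..<n]" unfolding t_def by (induction n) auto
  then have wf: "fo_wf S n t" using x by (simp add: fo_wf_def t_def atLeast0LessThan)
  have "tree_iso (tree_act act h (\<rho> h) t) t" if h: "h \<in> H" for h
  proof -
    have hc: "h \<in> carrier G" using subgroup.mem_carrier[OF fhset_subgroup[OF \<rho>] h] .
    have p: "\<rho> h permutes {..<n}" using fhset_permutes[OF \<rho> h] .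
    have ip: "pinv (\<rho> h) permutes {..<n}" using permutes_inv[OF p] .
    have "act n h id x = act n \<one> (pinv (\<rho> h)) (act n h (\<rho> h) x)"
      using act_comp[OF x one_closed hc ip p] permutes_inv_o(2)[OF p] hc by simp
    then have vertex: "act n h id x = act n \<one> (pinv (\<rho> h)) x" using fixed h by simp
    show ?thesis unfolding t_def tree_act_Node
    proof (rule tree_iso_Node[of _ _ "pinv (\<rho> h)"])
      show "\<forall>i<length (map Leaf [0..<n]).
          tree_iso (map (tree_act act h (\<rho> h)) (map Leaf [0..<n]) ! pinv (\<rho> h) i) (map Leaf [0..<n] ! i)"
        using permutes_in_image[OF ip] permutes_inverses(1)[OF p]
        by (simp add: tree_act_def tree_iso_Leaf)
    qed (use ip vertex x in \<open>simp_all add: vertex_rel_def\<close>)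
  qed
  then show "T \<in> adm_fo G S act" using T \<rho> wf adm_fo_iff tree_fixed_def by blast
qed

lemma adm_fo_iso:
  assumes A: "(H, n, \<rho>) \<in> adm_fo G S act" and \<rho>': "fhset G H n \<rho>'"
    and f: "bij_betw f {..<n} {..<n}" and equiv: "\<forall>h\<in>H. \<forall>i<n. f (\<rho>' h i) = \<rho> h (f i)"
  shows "(H, n, \<rho>') \<in> adm_fo G S act"
proof -
  from A obtain t where wf: "fo_wf S n t" and fixed: "tree_fixed H \<rho> t"
    using adm_fo_iff by blast
  define g where "g = the_inv_into {..<n} f"
  have g: "bij_betw g {..<n} {..<n}" unfolding g_def by (rule bij_betw_the_inv_into[OF f])
  note F = bij_betw_lessThan_inverse[OF f]
  have wf': "fo_wf S n (tree_relabel g t)"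
    using wf g unfolding fo_wf_def bij_betw_def by (auto simp: leaves_tree_relabel distinct_map)
  have "tree_iso (tree_act act h (\<rho>' h) (tree_relabel g t)) (tree_relabel g t)" if h: "h \<in> H" for h
  proof -
    have "\<rho>' h (g i) = g (\<rho> h i)" if i: "i < n" for i
    proof -
      have gi: "g i < n" "f (g i) = i" using F(1,2) i unfolding g_def by auto
      then have "f (\<rho>' h (g i)) = \<rho> h i" using equiv h by auto
      then show ?thesis using F(3) fhset_less[OF \<rho>' h gi(1)] unfolding g_def by metis
    qed
    then have "tree_act act h (\<rho>' h) (tree_relabel g t) = tree_relabel g (tree_act act h (\<rho> h) t)"
      using wf by (intro tree_act_tree_relabel) (auto simp: fo_wf_def)
    then show ?thesis using tree_iso_relabel fixed h unfolding tree_fixed_def by auto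
  qed
  then show ?thesis using adm_fo_iff \<rho>' wf' tree_fixed_def by blast
qed

lemma adm_fo_restrict:
  assumes A: "(H, n, \<rho>) \<in> adm_fo G S act" and K: "subgroup K G" and KH: "K \<subseteq> H"
  shows "(K, n, \<lambda>h. if h \<in> K then \<rho> h else id) \<in> adm_fo G S act"
proof -
  from A obtain t where \<rho>: "fhset G H n \<rho>" and wf: "fo_wf S n t" and fixed: "tree_fixed H \<rho> t"
    using adm_fo_iff by blast
  have "\<rho> (h \<otimes> h') = \<rho> h \<circ> \<rho> h'" if "h \<in> K" "h' \<in> K" for h h'
    using fhset_mult[OF \<rho>] KH that by blast
  then have "fhset G K n (\<lambda>h. if h \<in> K then \<rho> h else id)"
    using K KH \<rho> subgroup.m_closed[OF K] by (auto simp: fhset_def)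
  moreover have "tree_fixed K (\<lambda>h. if h \<in> K then \<rho> h else id) t"
    using fixed KH by (auto simp: tree_fixed_def)
  ultimately show ?thesis using adm_fo_iff wf by blast
qed

lemma adm_fo_conjugate:
  assumes A: "(H, n, \<rho>) \<in> adm_fo G S act" and g: "g \<in> carrier G"
  defines "H' \<equiv> (\<lambda>h. g \<otimes> h \<otimes> inv g) ` H"
  shows "(H', n, \<lambda>h. if h \<in> H' then \<rho> (inv g \<otimes> h \<otimes> g) else id) \<in> adm_fo G S act"
proof -
  from A obtain t where \<rho>: "fhset G H n \<rho>" and wf: "fo_wf S n t" and fixed: "tree_fixed H \<rho> t"
    using adm_fo_iff by blast
  have Hc: "\<And>k. k \<in> H \<Longrightarrow> k \<in> carrier G" using subgroup.mem_carrier[OF fhset_subgroup[OF \<rho>]] .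
  have lo: "labels_ok S t" using wf by (simp add: fo_wf_def)
  have wf': "fo_wf S n (tree_gact act g t)" using wf labels_ok_tree_gact[OF g] by (simp add: fo_wf_def)
  have "tree_iso (tree_act act (g \<otimes> k \<otimes> inv g) (\<rho> k) (tree_gact act g t)) (tree_gact act g t)"
    if k: "k \<in> H" for k
  proof -
    have "g \<otimes> k \<otimes> inv g \<otimes> g = g \<otimes> k" using g Hc[OF k] by (simp add: m_assoc)
    then have "tree_act act (g \<otimes> k \<otimes> inv g) (\<rho> k) (tree_gact act g t)
        = tree_gact act g (tree_act act k (\<rho> k) t)"
      using tree_gact_tree_gact[OF _ g lo, of "g \<otimes> k \<otimes> inv g"] tree_gact_tree_gact[OF g Hc[OF k] lo] g Hc[OF k]
      by (simp add: tree_act_def tree_gact_tree_relabel)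
    then show ?thesis using tree_iso_gact[OF _ g] fixed k unfolding tree_fixed_def by auto
  qed
  then have "tree_fixed H' (\<lambda>h. if h \<in> H' then \<rho> (inv g \<otimes> h \<otimes> g) else id) (tree_gact act g t)"
    unfolding tree_fixed_def H'_def using conjugate_back[OF g] Hc by auto
  then show ?thesis using adm_fo_iff fhset_conjugate[OF \<rho> g] wf' unfolding H'_def by blast
qed

lemma adm_fo_prod:
  assumes A: "(H, n, \<rho>) \<in> adm_fo G S act" and A': "(H, m, \<rho>') \<in> adm_fo G S act"
  shows "(H, n * m, hset_prod H n \<rho> m \<rho>') \<in> adm_fo G S act"
proof -
  from A obtain t where \<rho>: "fhset G H n \<rho>" and wf: "fo_wf S n t" and fixed: "tree_fixed H \<rho> t"
    using adm_fo_iff by blast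
  from A' obtain t' where \<rho>': "fhset G H m \<rho>'" and wf': "fo_wf S m t'" and fixed': "tree_fixed H \<rho>' t'"
    using adm_fo_iff by blast
  define F where "F = (\<lambda>i. tree_relabel (\<lambda>j. i * m + j) t')"
  have "fo_wf S (n * m) (graft t F)" unfolding F_def using fo_wf_graft_prod[OF wf wf'] .
  moreover have "tree_fixed H (hset_prod H n \<rho> m \<rho>') (graft t F)"
    unfolding tree_fixed_def
  proof
    fix h assume h: "h \<in> H"
    have "\<forall>i\<in>set (leaves t). tree_iso (tree_act act h (hset_prod H n \<rho> m \<rho>' h) (F i)) (F (\<rho> h i))"
    proof
      fix i assume "i \<in> set (leaves t)"
      then have i: "i < n" using wf by (simp add: fo_wf_def)
      have "tree_act act h (hset_prod H n \<rho> m \<rho>' h) (F i)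
          = tree_relabel (\<lambda>j. \<rho> h i * m + j) (tree_act act h (\<rho>' h) t')"
        unfolding F_def
      proof (rule tree_act_tree_relabel)
        fix j assume "j \<in> set (leaves t')"
        then have j: "j < m" using wf' by (simp add: fo_wf_def)
        show "hset_prod H n \<rho> m \<rho>' h (i * m + j) = \<rho> h i * m + \<rho>' h j"
          using hset_prod_apply(1)[OF \<rho> \<rho>' h mult_add_less[OF i j]] mult_add_div_mod[OF j] by simp
      qed
      then show "tree_iso (tree_act act h (hset_prod H n \<rho> m \<rho>' h) (F i)) (F (\<rho> h i))"
        using tree_iso_relabel fixed' h unfolding tree_fixed_def F_def by auto
    qed
    then show "tree_iso (tree_act act h (hset_prod H n \<rho> m \<rho>' h) (graft t F)) (graft t F)"
      using tree_iso_tree_act_graft fixed h unfolding tree_fixed_def by blast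
  qed
  ultimately show ?thesis using adm_fo_iff fhset_hset_prod[OF \<rho> \<rho>'] by blast
qed

end

lemma induced_hset_one_point:
  "induced_hset G H K 1 (\<lambda>h. id) m \<tau> \<longleftrightarrow>
   (\<exists>b<m. (\<forall>x<m. \<exists>h\<in>H. x = \<tau> h b) \<and> (\<forall>h\<in>H. \<forall>h'\<in>H. \<tau> h b = \<tau> h' b \<longleftrightarrow> (\<exists>k\<in>K. h' = h \<otimes>\<^bsub>G\<^esub> k)))"
    (is "_ \<longleftrightarrow> (\<exists>b<m. ?onto b \<and> ?eq b)")
proof
  assume "induced_hset G H K 1 (\<lambda>h. id) m \<tau>"
  then obtain j :: "nat \<Rightarrow> nat" where "j 0 < m" "?onto (j 0)" "?eq (j 0)"
    by (simp add: induced_hset_def) blast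
  then show "\<exists>b<m. ?onto b \<and> ?eq b" by blast
next
  assume "\<exists>b<m. ?onto b \<and> ?eq b"
  then obtain b where "b < m" "?onto b" "?eq b" by blast
  then show "induced_hset G H K 1 (\<lambda>h. id) m \<tau>"
    unfolding induced_hset_def by (intro exI[of _ "\<lambda>_. b"]) simp
qed

text \<open>The data of the self-induction axiom: \<open>T\<close> and \<open>H/K\<close> are admissible, witnessed by the
  trees \<open>tK\<close> and \<open>u\<close>, and \<open>X = H \<times>\<^sub>K T\<close> via \<open>j : T \<rightarrow> X\<close>.  Grafting onto the leaf \<open>a\<close> of
  \<open>u\<close> the tree \<open>tK\<close> translated by a representative of the coset \<open>a\<close> gives a tree for \<open>X\<close>.\<close>

locale self_induction = symseq_action +
  fixes H K n \<rho> tK m \<tau> u base N \<rho>' and j :: "nat \<Rightarrow> nat"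
  assumes subgroup_H: "subgroup H G" and K_subset: "K \<subseteq> H"
    and fhset_T: "fhset G K n \<rho>" and wf_T: "fo_wf S n tK" and fixed_T: "tree_fixed K \<rho> tK"
    and fhset_quot: "fhset G H m \<tau>" and wf_quot: "fo_wf S m u" and fixed_quot: "tree_fixed H \<tau> u"
    and base: "base < m" and base_onto: "\<forall>x<m. \<exists>h\<in>H. x = \<tau> h base"
    and base_eq: "\<forall>h\<in>H. \<forall>h'\<in>H. \<tau> h base = \<tau> h' base \<longleftrightarrow> (\<exists>k\<in>K. h' = h \<otimes> k)"
    and fhset_X: "fhset G H N \<rho>'"
    and j_less: "\<forall>s<n. j s < N" and j_onto: "\<forall>x<N. \<exists>h\<in>H. \<exists>s<n. x = \<rho>' h (j s)"
    and j_eq: "\<forall>h\<in>H. \<forall>h'\<in>H. \<forall>s<n. \<forall>s'<n.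
      \<rho>' h (j s) = \<rho>' h' (j s') \<longleftrightarrow> (\<exists>k\<in>K. h' = h \<otimes> k \<and> s = \<rho> k s')"
begin

lemma K_carrier: "k \<in> K \<Longrightarrow> k \<in> carrier G"
  using K_subset subgroup.mem_carrier[OF subgroup_H] by blast

lemma inv_K: "k \<in> K \<Longrightarrow> inv k \<in> K"
  using subgroup.m_inv_closed[OF fhset_subgroup[OF fhset_T]] .

lemma j_equivariant:
  assumes k: "k \<in> K" and s: "s < n"
  shows "\<rho>' k (j s) = j (\<rho> k s)"
proof -
  have "\<exists>k'\<in>K. \<one> = k \<otimes> k' \<and> s = \<rho> k' (\<rho> k s)"
    using inv_K[OF k] K_carrier[OF k] fhset_inv_apply[OF fhset_T k s] by (intro bexI[of _ "inv k"]) auto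
  then have "\<rho>' k (j s) = \<rho>' \<one> (j (\<rho> k s))"
    using j_eq K_subset k subgroup.one_closed[OF subgroup_H] s fhset_less[OF fhset_T k s] by blast
  then show ?thesis using fhset_one[OF fhset_X] by simp
qed

lemma base_fixed: "k \<in> K \<Longrightarrow> \<tau> k base = base"
  using base_eq K_subset subgroup.one_closed[OF subgroup_H] inv_K K_carrier fhset_one[OF fhset_quot]
  by (metis id_apply r_inv subsetD)

definition rep where
  "rep a = (SOME h. h \<in> H \<and> \<tau> h base = a)"

lemma rep:
  assumes "a < m"
  shows "rep a \<in> H \<and> \<tau> (rep a) base = a"
proof -
  have "\<exists>h. h \<in> H \<and> \<tau> h base = a" using base_onto assms by force
  then show ?thesis unfolding rep_def by (rule someI_ex)
qed

lemma rep_coset: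
  assumes "h \<in> H" and "\<tau> h base = a" and "a < m"
  obtains k where "k \<in> K" and "h = rep a \<otimes> k"
  using base_eq rep[OF assms(3)] assms(1,2) by metis

definition \<psi> where
  "\<psi> a s = \<rho>' (rep a) (j s)"

definition \<Phi> where
  "\<Phi> a = tree_relabel (\<psi> a) (tree_gact act (rep a) tK)"

lemma inj_on_\<psi>:
  assumes a: "a < m"
  shows "inj_on (\<psi> a) {..<n}"
proof (rule inj_onI)
  fix s s' assume "s \<in> {..<n}" "s' \<in> {..<n}" "\<psi> a s = \<psi> a s'"
  then obtain k where k: "k \<in> K" "rep a = rep a \<otimes> k" "s = \<rho> k s'"
    using j_eq rep[OF a] unfolding \<psi>_def by auto
  then have "k = \<one>"
    using K_carrier[OF k(1)] subgroup.mem_carrier[OF subgroup_H] rep[OF a] by (metis l_cancel_one')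
  then show "s = s'" using k(3) fhset_one[OF fhset_T] by simp
qed

lemma \<psi>_disjoint:
  assumes a: "a < m" and b: "b < m" and s: "s < n" and s': "s' < n" and eq: "\<psi> a s = \<psi> b s'"
  shows "a = b"
proof -
  obtain k where k: "k \<in> K" "rep b = rep a \<otimes> k"
    using j_eq rep[OF a] rep[OF b] s s' eq unfolding \<psi>_def by metis
  have "b = \<tau> (rep a \<otimes> k) base" using rep[OF b] k(2) by simp
  also have "\<dots> = \<tau> (rep a) (\<tau> k base)"
    using fhset_mult[OF fhset_quot] rep[OF a] K_subset k(1) by auto
  finally show ?thesis using base_fixed[OF k(1)] rep[OF a] by simp
qed

lemma \<psi>_onto: "(\<Union>a<m. \<psi> a ` {..<n}) = {..<N}"
proof
  show "(\<Union>a<m. \<psi> a ` {..<n}) \<subseteq> {..<N}"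
    using fhset_less[OF fhset_X] rep j_less unfolding \<psi>_def by auto
  show "{..<N} \<subseteq> (\<Union>a<m. \<psi> a ` {..<n})"
  proof
    fix x assume "x \<in> {..<N}"
    then obtain h s where h: "h \<in> H" and s: "s < n" and x: "x = \<rho>' h (j s)" using j_onto by auto
    define a where "a = \<tau> h base"
    have a: "a < m" unfolding a_def using fhset_less[OF fhset_quot h base] .
    obtain k where k: "k \<in> K" "h = rep a \<otimes> k" using rep_coset[OF h a_def[symmetric] a] .
    have "x = \<rho>' (rep a) (\<rho>' k (j s))"
      using x k fhset_mult[OF fhset_X] rep[OF a] K_subset by auto
    then have "x = \<psi> a (\<rho> k s)" unfolding \<psi>_def using j_equivariant[OF k(1) s] by simp
    then show "x \<in> (\<Union>a<m. \<psi> a ` {..<n})" using a fhset_less[OF fhset_T k(1) s] by blast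
  qed
qed

lemma fo_wf_graft_\<Phi>: "fo_wf S N (graft u \<Phi>)"
proof (rule fo_wf_graft)
  have leaves_u: "set (leaves u) = {..<m}" and leaves_tK: "set (leaves tK) = {..<n}"
    using wf_quot wf_T by (auto simp: fo_wf_def)
  have leaves_\<Phi>: "set (leaves (\<Phi> a)) = \<psi> a ` {..<n}" for a
    using leaves_tK by (simp add: \<Phi>_def leaves_tree_relabel)
  show "\<forall>a\<in>set (leaves u). labels_ok S (\<Phi> a) \<and> distinct (leaves (\<Phi> a))"
    using wf_T inj_on_\<psi> rep leaves_u labels_ok_tree_gact subgroup.mem_carrier[OF subgroup_H]
    by (auto simp: \<Phi>_def fo_wf_def leaves_tree_relabel distinct_map)
  show "\<forall>a\<in>set (leaves u). \<forall>b\<in>set (leaves u). a \<noteq> b \<longrightarrow> set (leaves (\<Phi> a)) \<inter> set (leaves (\<Phi> b)) = {}"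
    unfolding leaves_\<Phi> leaves_u using \<psi>_disjoint by blast
  show "(\<Union>a\<in>set (leaves u). set (leaves (\<Phi> a))) = {..<N}"
    unfolding leaves_\<Phi> leaves_u using \<psi>_onto by simp
qed (use wf_quot in \<open>simp_all add: fo_wf_def\<close>)

lemma tree_iso_tree_act_\<Phi>:
  assumes h: "h \<in> H" and a: "a < m"
  shows "tree_iso (tree_act act h (\<rho>' h) (\<Phi> a)) (\<Phi> (\<tau> h a))"
proof -
  define b where "b = \<tau> h a"
  have b: "b < m" unfolding b_def using fhset_less[OF fhset_quot h a] .
  have "\<tau> (h \<otimes> rep a) base = b"
    using fhset_mult[OF fhset_quot h] rep[OF a] b_def by simp
  then obtain k where k: "k \<in> K" "h \<otimes> rep a = rep b \<otimes> k"
    using rep_coset[OF subgroup.m_closed[OF subgroup_H h] _ b] rep[OF a] by blast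
  have carrier: "h \<in> carrier G" "rep a \<in> carrier G" "rep b \<in> carrier G" "k \<in> carrier G"
    using subgroup.mem_carrier[OF subgroup_H] h rep[OF a] rep[OF b] K_carrier[OF k(1)] by auto
  have lo: "labels_ok S tK" using wf_T by (simp add: fo_wf_def)
  have "\<rho>' h (\<psi> a s) = \<psi> b (\<rho> k s)" if s: "s < n" for s
  proof -
    have "\<rho>' h (\<psi> a s) = \<rho>' (rep b) (\<rho>' k (j s))"
      unfolding \<psi>_def using fhset_mult[OF fhset_X] h rep[OF a] rep[OF b] k K_subset
      by (metis comp_apply subsetD)
    then show ?thesis unfolding \<psi>_def using j_equivariant[OF k(1) s] by simp
  qed
  then have "tree_act act h (\<rho>' h) (\<Phi> a)
      = tree_relabel (\<psi> b) (tree_act act h (\<rho> k) (tree_gact act (rep a) tK))"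
    unfolding \<Phi>_def using wf_T by (intro tree_act_tree_relabel) (simp add: fo_wf_def)
  also have "tree_act act h (\<rho> k) (tree_gact act (rep a) tK) = tree_gact act (rep b) (tree_act act k (\<rho> k) tK)"
    using tree_gact_tree_gact[OF carrier(1,2) lo] tree_gact_tree_gact[OF carrier(3,4) lo] k(2)
    by (simp add: tree_act_def tree_gact_tree_relabel)
  finally have "tree_act act h (\<rho>' h) (\<Phi> a) = tree_relabel (\<psi> b) (tree_gact act (rep b) (tree_act act k (\<rho> k) tK))" .
  moreover have "tree_iso (tree_act act k (\<rho> k) tK) tK" using fixed_T k(1) by (simp add: tree_fixed_def)
  ultimately show ?thesis
    unfolding \<Phi>_def b_def[symmetric] using tree_iso_relabel tree_iso_gact[OF _ carrier(3)] by simp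
qed

lemma tree_fixed_graft_\<Phi>: "tree_fixed H \<rho>' (graft u \<Phi>)"
  unfolding tree_fixed_def
proof
  fix h assume h: "h \<in> H"
  have "\<forall>a\<in>set (leaves u). tree_iso (tree_act act h (\<rho>' h) (\<Phi> a)) (\<Phi> (\<tau> h a))"
    using tree_iso_tree_act_\<Phi>[OF h] wf_quot by (simp add: fo_wf_def)
  then show "tree_iso (tree_act act h (\<rho>' h) (graft u \<Phi>)) (graft u \<Phi>)"
    using tree_iso_tree_act_graft fixed_quot h unfolding tree_fixed_def by blast
qed

end

context symseq_action
begin

lemma adm_fo_self_induction:
  assumes H: "subgroup H G" and KH: "K \<subseteq> H"
    and T: "(K, n, \<rho>) \<in> adm_fo G S act"
    and quot: "(H, m, \<tau>) \<in> adm_fo G S act" and quot_ind: "induced_hset G H K 1 (\<lambda>h. id) m \<tau>"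
    and X: "fhset G H N \<rho>'" and X_ind: "induced_hset G H K n \<rho> N \<rho>'"
  shows "(H, N, \<rho>') \<in> adm_fo G S act"
proof -
  obtain tK where "fhset G K n \<rho>" "fo_wf S n tK" "tree_fixed K \<rho> tK"
    using T adm_fo_iff by blast
  moreover obtain u where "fhset G H m \<tau>" "fo_wf S m u" "tree_fixed H \<tau> u"
    using quot adm_fo_iff by blast
  moreover obtain base where "base < m" "\<forall>x<m. \<exists>h\<in>H. x = \<tau> h base"
    "\<forall>h\<in>H. \<forall>h'\<in>H. \<tau> h base = \<tau> h' base \<longleftrightarrow> (\<exists>k\<in>K. h' = h \<otimes> k)"
    using quot_ind unfolding induced_hset_one_point by blast
  moreover obtain j :: "nat \<Rightarrow> nat" where "\<forall>s<n. j s < N" "\<forall>x<N. \<exists>h\<in>H. \<exists>s<n. x = \<rho>' h (j s)"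
    "\<forall>h\<in>H. \<forall>h'\<in>H. \<forall>s<n. \<forall>s'<n. \<rho>' h (j s) = \<rho>' h' (j s') \<longleftrightarrow> (\<exists>k\<in>K. h' = h \<otimes> k \<and> s = \<rho> k s')"
    using X_ind unfolding induced_hset_def by blast
  ultimately interpret self_induction G S act H K n \<rho> tK m \<tau> u base N \<rho>' j
    using H KH X by intro_locales (simp add: self_induction_axioms_def)
  show ?thesis using adm_fo_iff X fo_wf_graft_\<Phi> tree_fixed_graft_\<Phi> by blast
qed

end

text \<open>Restriction of a tree along \<open>f\<close>: the leaves outside the image of \<open>f\<close> are capped by the
  nullary vertex \<open>z\<close>.\<close>

definition cap_leaves :: "'x \<Rightarrow> (nat \<Rightarrow> nat) \<Rightarrow> nat \<Rightarrow> nat \<Rightarrow> 'x ftree" where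
  "cap_leaves z f m l = (if l \<in> f ` {..<m} then Leaf (the_inv_into {..<m} f l) else Node z [])"

lemma fo_wf_graft_cap_leaves:
  assumes z: "z \<in> S 0" and wf: "fo_wf S n t" and f: "inj_on f {..<m}" and f_into: "f ` {..<m} \<subseteq> {..<n}"
  shows "fo_wf S m (graft t (cap_leaves z f m))"
proof (rule fo_wf_graft)
  let ?g = "the_inv_into {..<m} f"
  have leaves: "set (leaves (cap_leaves z f m l)) = (if l \<in> f ` {..<m} then {?g l} else {})" for l
    by (simp add: cap_leaves_def)
  show "\<forall>l\<in>set (leaves t). labels_ok S (cap_leaves z f m l) \<and> distinct (leaves (cap_leaves z f m l))"
    using z by (simp add: cap_leaves_def)
  have "?g l \<noteq> ?g l'" if "l \<in> f ` {..<m}" "l' \<in> f ` {..<m}" "l \<noteq> l'" for l l'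
    using f_the_inv_into_f[OF f] that by metis
  then show "\<forall>l\<in>set (leaves t). \<forall>l'\<in>set (leaves t). l \<noteq> l' \<longrightarrow>
      set (leaves (cap_leaves z f m l)) \<inter> set (leaves (cap_leaves z f m l')) = {}"
    unfolding leaves by auto
  have "(\<Union>l\<in>set (leaves t). set (leaves (cap_leaves z f m l))) = ?g ` (f ` {..<m} \<inter> {..<n})"
    using wf unfolding leaves fo_wf_def by auto
  also have "\<dots> = {..<m}" using f_into the_inv_into_onto[OF f] by (simp add: Int_absorb2)
  finally show "(\<Union>l\<in>set (leaves t). set (leaves (cap_leaves z f m l))) = {..<m}" .
qed (use wf in \<open>simp_all add: fo_wf_def\<close>)

context group
begin

lemma tree_act_cap_leaves:
  assumes \<rho>: "fhset G H n \<rho>" and \<rho>': "fhset G H m \<rho>'" and f: "inj_on f {..<m}"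
    and equiv: "\<forall>h\<in>H. \<forall>i<m. f (\<rho>' h i) = \<rho> h (f i)" and h: "h \<in> H"
    and z: "act 0 h id z = z" and l: "l < n"
  shows "tree_act act h (\<rho>' h) (cap_leaves z f m l) = cap_leaves z f m (\<rho> h l)"
proof (cases "l \<in> f ` {..<m}")
  case True
  then obtain a where a: "a < m" "l = f a" by auto
  have "\<rho> h l = f (\<rho>' h a)" using equiv h a by simp
  moreover have "\<rho>' h a < m" using fhset_less[OF \<rho>' h a(1)] .
  ultimately show ?thesis using a the_inv_into_f_f[OF f] by (simp add: cap_leaves_def tree_act_def)
next
  case False
  have "\<rho> h l \<notin> f ` {..<m}"
  proof
    assume "\<rho> h l \<in> f ` {..<m}"
    then obtain a where a: "a < m" "\<rho> h l = f a" by auto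
    have "l = \<rho> (inv h) (f a)" using fhset_inv_apply[OF \<rho> h l] a by simp
    also have "\<dots> = f (\<rho>' (inv h) a)"
      using equiv subgroup.m_inv_closed[OF fhset_subgroup[OF \<rho>] h] a by simp
    finally show False
      using False fhset_less[OF \<rho>' subgroup.m_inv_closed[OF fhset_subgroup[OF \<rho>] h] a(1)] by blast
  qed
  then show ?thesis using False z by (simp add: cap_leaves_def tree_act_def)
qed

end

context symseq_with_fixed_points
begin

lemma adm_fo_trivial:
  assumes H: "subgroup H G"
  shows "(H, n, \<lambda>h. id) \<in> adm_fo G S act"
proof -
  obtain t where wf: "fo_wf S n t" and fixed: "\<forall>g\<in>carrier G. tree_gact act g t = t"
    using G_fixed_tree by blast
  have "tree_fixed H (\<lambda>h. id) t"
    using fixed subgroup.mem_carrier[OF H] by (simp add: tree_fixed_def tree_act_def tree_relabel_id tree_iso_refl)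
  moreover have "fhset G H n (\<lambda>h. id)" using H by (simp add: fhset_def)
  ultimately show ?thesis using adm_fo_iff wf by blast
qed

lemma adm_fo_subobject:
  assumes A: "(H, n, \<rho>) \<in> adm_fo G S act" and \<rho>': "fhset G H m \<rho>'"
    and f: "inj_on f {..<m}" and f_into: "f ` {..<m} \<subseteq> {..<n}"
    and equiv: "\<forall>h\<in>H. \<forall>i<m. f (\<rho>' h i) = \<rho> h (f i)"
  shows "(H, m, \<rho>') \<in> adm_fo G S act"
proof -
  from A obtain t where \<rho>: "fhset G H n \<rho>" and wf: "fo_wf S n t" and fixed: "tree_fixed H \<rho> t"
    using adm_fo_iff by blast
  obtain z where z: "z \<in> S 0" "\<forall>g\<in>carrier G. act 0 g id z = z"
    using fixed0 by (auto simp: level_has_G_fixed_def)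
  have "tree_iso (tree_act act h (\<rho>' h) (graft t (cap_leaves z f m))) (graft t (cap_leaves z f m))"
    if h: "h \<in> H" for h
  proof (rule tree_iso_tree_act_graft)
    show "tree_iso (tree_act act h (\<rho> h) t) t" using fixed h by (simp add: tree_fixed_def)
    show "\<forall>l\<in>set (leaves t). tree_iso (tree_act act h (\<rho>' h) (cap_leaves z f m l)) (cap_leaves z f m (\<rho> h l))"
      using tree_act_cap_leaves[OF \<rho> \<rho>' f equiv h, of act z] z(2) subgroup.mem_carrier[OF fhset_subgroup[OF \<rho>] h]
        wf tree_iso_refl by (simp add: fo_wf_def)
  qed
  then show ?thesis
    using adm_fo_iff \<rho>' fo_wf_graft_cap_leaves[OF z(1) wf f f_into] unfolding tree_fixed_def by blast
qed

lemma adm_fo_sum: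
  assumes A: "(H, n, \<rho>) \<in> adm_fo G S act" and A': "(H, m, \<rho>') \<in> adm_fo G S act"
  shows "(H, n + m, hset_sum H n \<rho> m \<rho>') \<in> adm_fo G S act"
proof -
  from A obtain t where \<rho>: "fhset G H n \<rho>" and wf: "fo_wf S n t" and fixed: "tree_fixed H \<rho> t"
    using adm_fo_iff by blast
  from A' obtain t' where \<rho>': "fhset G H m \<rho>'" and wf': "fo_wf S m t'" and fixed': "tree_fixed H \<rho>' t'"
    using adm_fo_iff by blast
  obtain y where y: "y \<in> S 2" "\<forall>g\<in>carrier G. act 2 g id y = y"
    using fixed2 by (auto simp: level_has_G_fixed_def)
  define T where "T = Node y [t, tree_relabel ((+) n) t']"
  have "(+) n ` {..<m} = {n..<n + m}"
    using image_add_atLeastLessThan[of n 0 m] by (simp add: atLeast0LessThan add.commute)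
  then have "fo_wf S (n + m) T"
    using y wf wf' by (auto simp: T_def fo_wf_def numeral_2_eq_2 leaves_tree_relabel distinct_map)
  moreover have "tree_fixed H (hset_sum H n \<rho> m \<rho>') T"
    unfolding tree_fixed_def
  proof
    fix h assume h: "h \<in> H"
    have "tree_act act h (hset_sum H n \<rho> m \<rho>' h) t = tree_act act h (\<rho> h) t"
      using tree_act_tree_relabel[of t "hset_sum H n \<rho> m \<rho>' h" id id "\<rho> h" act h] wf h
      by (simp add: tree_relabel_id fo_wf_def hset_sum_def)
    moreover have "tree_act act h (hset_sum H n \<rho> m \<rho>' h) (tree_relabel ((+) n) t')
        = tree_relabel ((+) n) (tree_act act h (\<rho>' h) t')"
      using wf' h by (intro tree_act_tree_relabel) (simp add: fo_wf_def hset_sum_def)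
    ultimately have "tree_act act h (hset_sum H n \<rho> m \<rho>' h) T
        = Node y [tree_act act h (\<rho> h) t, tree_relabel ((+) n) (tree_act act h (\<rho>' h) t')]"
      using y h subgroup.mem_carrier[OF fhset_subgroup[OF \<rho>]] by (simp add: T_def tree_act_Node numeral_2_eq_2)
    also have "tree_iso \<dots> T"
      unfolding T_def
    proof (rule tree_iso_Node[of _ _ id])
      show "\<forall>i<length [t, tree_relabel ((+) n) t'].
          tree_iso ([tree_act act h (\<rho> h) t, tree_relabel ((+) n) (tree_act act h (\<rho>' h) t')] ! id i)
            ([t, tree_relabel ((+) n) t'] ! i)"
        using fixed fixed' h tree_iso_relabel unfolding tree_fixed_def by (auto simp: less_Suc_eq)
    qed (simp_all add: vertex_rel_refl)
    finally show "tree_iso (tree_act act h (hset_sum H n \<rho> m \<rho>' h) T) T" .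
  qed
  ultimately show ?thesis using adm_fo_iff fhset_hset_sum[OF \<rho> \<rho>'] by blast
qed

lemma indexing_system_adm_fo: "indexing_system G (adm_fo G S act)"
  unfolding indexing_system_def
  apply (intro conjI allI impI)
  subgoal by (auto simp: adm_fo_def)
  subgoal by (rule adm_fo_trivial)
  subgoal by (rule adm_fo_iso)
  subgoal by (rule adm_fo_subobject)
  subgoal by (rule adm_fo_restrict)
  subgoal by (rule adm_fo_conjugate)
  subgoal by (rule adm_fo_sum[unfolded hset_sum_def])
  subgoal by (rule adm_fo_prod[unfolded hset_prod_def])
  subgoal by (elim exE conjE) (rule adm_fo_self_induction)
  done

lemma gen_indexing_system_subset_adm_fo: "gen_indexing_system G (adm_seq G S act) \<subseteq> adm_fo G S act"
  unfolding gen_indexing_system_def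
  using indexing_system_adm_fo adm_seq_subset_adm_fo by blast

end

section \<open>Every indexing system containing the admissible sets of \<open>S\<close> contains those of \<open>F(S)\<close>\<close>

lemma bij_betw_lessThan_Un:
  fixes a b :: nat
  assumes eA: "bij_betw eA {..<a} A" and eB: "bij_betw eB {..<b} B" and disjoint: "A \<inter> B = {}"
  shows "bij_betw (\<lambda>i. if i < a then eA i else eB (i - a)) {..<a + b} (A \<union> B)"
  unfolding bij_betw_def
proof
  let ?e = "\<lambda>i. if i < a then eA i else eB (i - a)"
  note EA = bij_betw_lessThan_inverse[OF eA] and EB = bij_betw_lessThan_inverse[OF eB]
  show "inj_on ?e {..<a + b}"
  proof (rule inj_onI)
    fix i j assume i: "i \<in> {..<a + b}" and j: "j \<in> {..<a + b}" and eq: "?e i = ?e j"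
    show "i = j"
    proof (cases "i < a"; cases "j < a")
      assume "i < a" "j < a"
      then show ?thesis using eq inj_onD[OF bij_betw_imp_inj_on[OF eA]] by simp
    next
      assume "\<not> i < a" "\<not> j < a"
      then have "eB (i - a) = eB (j - a)" "i - a < b" "j - a < b" using eq i j by auto
      then have "i - a = j - a" using inj_onD[OF bij_betw_imp_inj_on[OF eB]] by simp
      then show ?thesis using \<open>\<not> i < a\<close> \<open>\<not> j < a\<close> by simp
    qed (use eq i j EA(4)[of i] EA(4)[of j] EB(4)[of "i - a"] EB(4)[of "j - a"] disjoint in auto)
  qed
  show "?e ` {..<a + b} = A \<union> B"
  proof
    show "?e ` {..<a + b} \<subseteq> A \<union> B" using EA(4) EB(4) by auto
    show "A \<union> B \<subseteq> ?e ` {..<a + b}"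
    proof
      fix y assume "y \<in> A \<union> B"
      then consider "y \<in> A" | "y \<in> B" by blast
      then show "y \<in> ?e ` {..<a + b}"
      proof cases
        case 1
        then have "y = ?e (the_inv_into {..<a} eA y)" "the_inv_into {..<a} eA y < a + b"
          using EA(1,2)[of y] by auto
        then show ?thesis by blast
      next
        case 2
        then have "y = ?e (a + the_inv_into {..<b} eB y)" "a + the_inv_into {..<b} eB y < a + b"
          using EB(1,2)[of y] by auto
        then show ?thesis by blast
      qed
    qed
  qed
qed

context group
begin

lemma transfer_action_Un:
  fixes a b :: nat
  assumes aA: "action_on H A \<rho>" and aB: "action_on H B \<rho>" and disjoint: "A \<inter> B = {}"
    and eA: "bij_betw eA {..<a} A" and eB: "bij_betw eB {..<b} B"
  defines "e \<equiv> \<lambda>i. if i < a then eA i else eB (i - a)"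
  shows "transfer_action e (a + b) H \<rho> = hset_sum H a (transfer_action eA a H \<rho>) b (transfer_action eB b H \<rho>)"
proof (intro ext)
  fix h i
  note EA = bij_betw_lessThan_inverse[OF eA] and EB = bij_betw_lessThan_inverse[OF eB]
  have inj: "inj_on e {..<a + b}"
    using bij_betw_imp_inj_on[OF bij_betw_lessThan_Un[OF eA eB disjoint]] unfolding e_def .
  show "transfer_action e (a + b) H \<rho> h i = hset_sum H a (transfer_action eA a H \<rho>) b (transfer_action eB b H \<rho>) h i"
  proof (cases "h \<in> H \<and> i < a + b")
    case True
    then have h: "h \<in> H" and i: "i < a + b" by auto
    show ?thesis
    proof (cases "i < a")
      case True
      define r where "r = \<rho> h (eA i)"
      have r: "r \<in> A" unfolding r_def using action_on_closed[OF aA h EA(4)[OF True]] .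
      have "the_inv_into {..<a + b} e r = the_inv_into {..<a} eA r"
        using EA(1,2)[OF r] by (intro the_inv_into_f_eq[OF inj]) (auto simp: e_def)
      then show ?thesis using h i True by (simp add: transfer_action_def hset_sum_def e_def r_def)
    next
      case False
      then have ib: "i - a < b" using i by simp
      define r where "r = \<rho> h (eB (i - a))"
      have r: "r \<in> B" unfolding r_def using action_on_closed[OF aB h EB(4)[OF ib]] .
      have "the_inv_into {..<a + b} e r = a + the_inv_into {..<b} eB r"
        using EB(1,2)[OF r] by (intro the_inv_into_f_eq[OF inj]) (auto simp: e_def)
      then show ?thesis using h i False ib by (simp add: transfer_action_def hset_sum_def e_def r_def)
    qed
  qed (auto simp: transfer_action_def hset_sum_def)
qed

lemma action_on_eq_iff:
  assumes H: "subgroup H G" and KH: "K \<subseteq> H" and aL: "action_on H L \<rho>" and LiL: "Li \<subseteq> L"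
    and aK: "action_on K Li \<rho>"
    and sep: "\<forall>h\<in>H. \<forall>h'\<in>H. \<forall>y\<in>Li. \<forall>y'\<in>Li. \<rho> h y = \<rho> h' y' \<longrightarrow> inv h \<otimes> h' \<in> K"
    and h: "h \<in> H" and h': "h' \<in> H" and y: "y \<in> Li" and y': "y' \<in> Li"
  shows "\<rho> h y = \<rho> h' y' \<longleftrightarrow> (\<exists>k\<in>K. h' = h \<otimes> k \<and> y = \<rho> k y')"
proof
  assume eq: "\<rho> h y = \<rho> h' y'"
  define k where "k = inv h \<otimes> h'"
  have k: "k \<in> K" unfolding k_def using sep h h' y y' eq by blast
  have hk: "h' = h \<otimes> k"
    unfolding k_def using subgroup.mem_carrier[OF H] h h' by (simp add: m_assoc[symmetric])
  have "\<rho> k y' = \<rho> (inv h) (\<rho> h' y')"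
    unfolding k_def using action_on_mult[OF aL subgroup.m_inv_closed[OF H h] h'] LiL y' by blast
  also have "\<dots> = \<rho> (inv h) (\<rho> h y)" using eq by simp
  also have "\<dots> = y" using action_on_inv_apply[OF aL H h] LiL y by blast
  finally show "\<exists>k\<in>K. h' = h \<otimes> k \<and> y = \<rho> k y'" using k hk by metis
next
  assume "\<exists>k\<in>K. h' = h \<otimes> k \<and> y = \<rho> k y'"
  then obtain k where k: "k \<in> K" and "h' = h \<otimes> k" "y = \<rho> k y'" by blast
  moreover have "\<rho> (h \<otimes> k) y' = \<rho> h (\<rho> k y')"
    using action_on_mult[OF aL h] KH LiL y' k by blast
  ultimately show "\<rho> h y = \<rho> h' y'" by simp
qed

lemma induced_hset_transfer_action:
  assumes H: "subgroup H G" and KH: "K \<subseteq> H" and aL: "action_on H L \<rho>" and LiL: "Li \<subseteq> L"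
    and aK: "action_on K Li \<rho>"
    and e: "bij_betw e {..<N} L" and ei: "bij_betw ei {..<ni} Li"
    and cov: "\<forall>x\<in>L. \<exists>h\<in>H. \<exists>y\<in>Li. x = \<rho> h y"
    and sep: "\<forall>h\<in>H. \<forall>h'\<in>H. \<forall>y\<in>Li. \<forall>y'\<in>Li. \<rho> h y = \<rho> h' y' \<longrightarrow> inv h \<otimes> h' \<in> K"
  shows "induced_hset G H K ni (transfer_action ei ni K \<rho>) N (transfer_action e N H \<rho>)"
proof -
  note E = bij_betw_lessThan_inverse[OF e] and Ei = bij_betw_lessThan_inverse[OF ei]
  define j where "j = (\<lambda>s. the_inv_into {..<N} e (ei s))"
  have eiL: "ei s \<in> L" if "s < ni" for s using Ei(4) LiL that by blast
  have j_less: "j s < N" if "s < ni" for s unfolding j_def using E(2) eiL that by blast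
  have transfer_j: "transfer_action e N H \<rho> h (j s) = the_inv_into {..<N} e (\<rho> h (ei s))"
    if "h \<in> H" "s < ni" for h s
    using transfer_action_apply[OF that(1) j_less[OF that(2)], of e \<rho>] E(1)[OF eiL[OF that(2)]]
    by (simp add: j_def)
  have eq_iff: "transfer_action e N H \<rho> h (j s) = transfer_action e N H \<rho> h' (j s') \<longleftrightarrow>
      (\<exists>k\<in>K. h' = h \<otimes> k \<and> s = transfer_action ei ni K \<rho> k s')"
    if h: "h \<in> H" "h' \<in> H" and s: "s < ni" "s' < ni" for h h' s s'
  proof -
    have "transfer_action e N H \<rho> h (j s) = transfer_action e N H \<rho> h' (j s') \<longleftrightarrow> \<rho> h (ei s) = \<rho> h' (ei s')"
      using transfer_j h s E(1) action_on_closed[OF aL] eiL by metis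
    also have "\<dots> \<longleftrightarrow> (\<exists>k\<in>K. h' = h \<otimes> k \<and> ei s = \<rho> k (ei s'))"
      using action_on_eq_iff[OF H KH aL LiL aK sep h] Ei(4) s by blast
    also have "\<dots> \<longleftrightarrow> (\<exists>k\<in>K. h' = h \<otimes> k \<and> s = transfer_action ei ni K \<rho> k s')"
      using Ei transfer_action_apply s action_on_closed[OF aK] by metis
    finally show ?thesis .
  qed
  have onto: "\<exists>h\<in>H. \<exists>s<ni. x = transfer_action e N H \<rho> h (j s)" if x: "x < N" for x
  proof -
    obtain h y where hy: "h \<in> H" "y \<in> Li" "e x = \<rho> h y" using cov E(4)[OF x] by blast
    then have "x = transfer_action e N H \<rho> h (j (the_inv_into {..<ni} ei y))"
      using transfer_j Ei(1,2) E(3)[OF x] by simp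
    then show ?thesis using hy Ei(2) by blast
  qed
  show ?thesis unfolding induced_hset_def using j_less onto eq_iff by blast
qed

lemma subgroup_stabilizer:
  assumes \<alpha>: "fhset G H k \<alpha>" and i0: "i0 < k"
  shows "subgroup {h \<in> H. \<alpha> h i0 = i0} G"
proof -
  have H: "subgroup H G" using fhset_subgroup[OF \<alpha>] .
  show ?thesis
  proof (rule subgroupI)
    show "{h \<in> H. \<alpha> h i0 = i0} \<subseteq> carrier G" using subgroup.mem_carrier[OF H] by blast
    show "{h \<in> H. \<alpha> h i0 = i0} \<noteq> {}" using subgroup.one_closed[OF H] fhset_one[OF \<alpha>] by auto
    show "inv a \<in> {h \<in> H. \<alpha> h i0 = i0}" if "a \<in> {h \<in> H. \<alpha> h i0 = i0}" for a
      using that fhset_inv_apply[OF \<alpha> _ i0] subgroup.m_inv_closed[OF H] by force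
    show "a \<otimes> b \<in> {h \<in> H. \<alpha> h i0 = i0}"
      if "a \<in> {h \<in> H. \<alpha> h i0 = i0}" "b \<in> {h \<in> H. \<alpha> h i0 = i0}" for a b
      using that fhset_mult[OF \<alpha>] subgroup.m_closed[OF H] by auto
  qed
qed

lemma orbit_eq_iff:
  assumes \<alpha>: "fhset G H k \<alpha>" and i0: "i0 < k" and h: "h \<in> H" and h': "h' \<in> H"
  shows "\<alpha> h i0 = \<alpha> h' i0 \<longleftrightarrow> (\<exists>s\<in>{h \<in> H. \<alpha> h i0 = i0}. h' = h \<otimes> s)"
proof
  have H: "subgroup H G" using fhset_subgroup[OF \<alpha>] .
  assume eq: "\<alpha> h i0 = \<alpha> h' i0"
  define s where "s = inv h \<otimes> h'"
  have s: "s \<in> H" unfolding s_def using subgroup.m_closed[OF H subgroup.m_inv_closed[OF H h] h'] .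
  have "\<alpha> s i0 = \<alpha> (inv h) (\<alpha> h i0)"
    unfolding s_def using fhset_mult[OF \<alpha> subgroup.m_inv_closed[OF H h] h'] eq by simp
  then have "\<alpha> s i0 = i0" using fhset_inv_apply[OF \<alpha> h i0] by simp
  moreover have "h' = h \<otimes> s"
    unfolding s_def using subgroup.mem_carrier[OF H] h h' by (simp add: m_assoc[symmetric])
  ultimately show "\<exists>s\<in>{h \<in> H. \<alpha> h i0 = i0}. h' = h \<otimes> s" using s by blast
next
  assume "\<exists>s\<in>{h \<in> H. \<alpha> h i0 = i0}. h' = h \<otimes> s"
  then show "\<alpha> h i0 = \<alpha> h' i0" using fhset_mult[OF \<alpha> h] by auto
qed

lemma invariant_Diff_orbit:
  assumes \<alpha>: "fhset G H k \<alpha>" and J: "J \<subseteq> {..<k}" and invariant: "\<forall>h\<in>H. \<forall>i\<in>J. \<alpha> h i \<in> J"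
  shows "\<forall>h\<in>H. \<forall>i\<in>J - (\<lambda>h. \<alpha> h i0) ` H. \<alpha> h i \<in> J - (\<lambda>h. \<alpha> h i0) ` H"
proof (intro ballI)
  fix h i assume h: "h \<in> H" and i: "i \<in> J - (\<lambda>h. \<alpha> h i0) ` H"
  have "\<alpha> h i \<notin> (\<lambda>h. \<alpha> h i0) ` H"
  proof
    assume "\<alpha> h i \<in> (\<lambda>h. \<alpha> h i0) ` H"
    then obtain h' where "h' \<in> H" "\<alpha> h i = \<alpha> h' i0" by blast
    moreover have "i = \<alpha> (inv h) (\<alpha> h i)" using fhset_inv_apply[OF \<alpha> h] i J by auto
    ultimately have "i = \<alpha> (inv h \<otimes> h') i0"
      using fhset_mult[OF \<alpha> subgroup.m_inv_closed[OF fhset_subgroup[OF \<alpha>] h]] by simp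
    then show False
      using i subgroup.m_closed[OF fhset_subgroup[OF \<alpha>] subgroup.m_inv_closed[OF fhset_subgroup[OF \<alpha>] h]]
        \<open>h' \<in> H\<close> by blast
  qed
  then show "\<alpha> h i \<in> J - (\<lambda>h. \<alpha> h i0) ` H" using invariant h i by blast
qed

lemma action_on_orbit:
  assumes \<alpha>: "fhset G H k \<alpha>"
  shows "action_on H ((\<lambda>h. \<alpha> h i0) ` H) \<alpha>"
  unfolding action_on_def
proof (intro conjI ballI)
  fix h x assume h: "h \<in> H" and "x \<in> (\<lambda>h. \<alpha> h i0) ` H"
  then obtain h' where h': "h' \<in> H" "x = \<alpha> h' i0" by blast
  then have "\<alpha> h x = \<alpha> (h \<otimes> h') i0" using fhset_mult[OF \<alpha> h] by simp
  then show "\<alpha> h x \<in> (\<lambda>h. \<alpha> h i0) ` H"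
    using subgroup.m_closed[OF fhset_subgroup[OF \<alpha>] h h'(1)] by blast
qed (use fhset_mult[OF \<alpha>] fhset_one[OF \<alpha>] in simp_all)

end

context sigma_free_symseq
begin

lemma fixed_Node_vertex_perm:
  assumes x: "x \<in> S (length ts)" and h: "h \<in> carrier G"
    and fixed: "tree_iso (tree_act act h \<sigma> (Node x ts)) (Node x ts)"
  obtains \<pi> where "\<pi> permutes {..<length ts}" and "act (length ts) h \<pi> x = x"
    and "\<forall>i<length ts. tree_iso (tree_act act h \<sigma> (ts ! i)) (ts ! \<pi> i)"
proof -
  let ?k = "length ts"
  from fixed obtain \<pi> where \<pi>: "\<pi> permutes {..<?k}" and rel: "vertex_rel ?k \<pi> (act ?k h id x) x"
    and children: "\<forall>i<?k. tree_iso (map (tree_act act h \<sigma>) ts ! \<pi> i) (ts ! i)"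
    by (cases rule: tree_iso.cases) (auto simp: tree_act_Node)
  have inv: "pinv \<pi> permutes {..<?k}" using permutes_inv[OF \<pi>] .
  have "act ?k h id x = act ?k \<one> \<pi> x" using rel act_one[OF x] by (auto simp: vertex_rel_def)
  then have "act ?k h (pinv \<pi>) x = x"
    using act_comp[OF x one_closed h inv permutes_id] act_one_inv_perm[OF x \<pi>] h by simp
  moreover have "\<forall>i<?k. tree_iso (tree_act act h \<sigma> (ts ! i)) (ts ! pinv \<pi> i)"
  proof (intro allI impI)
    fix i assume i: "i < ?k"
    have "pinv \<pi> i < ?k" using permutes_in_image[OF inv] i by simp
    then show "tree_iso (tree_act act h \<sigma> (ts ! i)) (ts ! pinv \<pi> i)"
      using children permutes_inverses(1)[OF \<pi>, of i] i by fastforce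
  qed
  ultimately show ?thesis using that inv by blast
qed

lemma fixed_Node_vertex_action:
  assumes x: "x \<in> S (length ts)" and H: "subgroup H G"
    and fixed: "\<forall>h\<in>H. tree_iso (tree_act act h (\<rho> h) (Node x ts)) (Node x ts)"
  obtains \<alpha> where "fhset G H (length ts) \<alpha>" and "\<forall>h\<in>H. act (length ts) h (\<alpha> h) x = x"
    and "\<forall>h\<in>H. \<forall>i<length ts. tree_iso (tree_act act h (\<rho> h) (ts ! i)) (ts ! \<alpha> h i)"
proof -
  let ?k = "length ts"
  have carrier: "h \<in> carrier G" if "h \<in> H" for h using subgroup.mem_carrier[OF H that] .
  \<comment> \<open>freeness of \<open>S\<close> makes the permutation of the children unique\<close>
  define \<alpha> where "\<alpha> = (\<lambda>h. if h \<in> H then (THE \<pi>. \<pi> permutes {..<?k} \<and> act ?k h \<pi> x = x) else id)"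
  have \<alpha>: "\<alpha> h permutes {..<?k} \<and> act ?k h (\<alpha> h) x = x \<and>
      (\<forall>i<?k. tree_iso (tree_act act h (\<rho> h) (ts ! i)) (ts ! \<alpha> h i))" if h: "h \<in> H" for h
  proof -
    obtain \<pi> where \<pi>: "\<pi> permutes {..<?k}" "act ?k h \<pi> x = x"
      "\<forall>i<?k. tree_iso (tree_act act h (\<rho> h) (ts ! i)) (ts ! \<pi> i)"
      using fixed_Node_vertex_perm[OF x carrier[OF h]] fixed h by blast
    have "\<alpha> h = \<pi>"
      unfolding \<alpha>_def using h \<pi> act_fixing_perm_unique[OF x carrier[OF h]] by (auto intro!: the_equality)
    then show ?thesis using \<pi> by simp
  qed
  have "\<alpha> (h \<otimes> h') = \<alpha> h \<circ> \<alpha> h'" if h: "h \<in> H" "h' \<in> H" for h h'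
  proof -
    have hh': "h \<otimes> h' \<in> H" using subgroup.m_closed[OF H h] .
    have "act ?k (h \<otimes> h') (\<alpha> h \<circ> \<alpha> h') x = x"
      using act_comp[OF x carrier[OF h(1)] carrier[OF h(2)]] \<alpha> h by simp
    moreover have "\<alpha> h \<circ> \<alpha> h' permutes {..<?k}"
      using permutes_compose \<alpha>[OF h(1)] \<alpha>[OF h(2)] by blast
    ultimately show ?thesis
      using act_fixing_perm_unique[OF x carrier[OF hh'], of "\<alpha> (h \<otimes> h')"] \<alpha>[OF hh'] by blast
  qed
  then have "fhset G H ?k \<alpha>" unfolding fhset_def using H \<alpha> by (simp add: \<alpha>_def)
  then show ?thesis using that \<alpha> by blast
qed

end

locale indexing_system_over = sigma_free_symseq +
  fixes I
  assumes indexing_I: "indexing_system G I" and adm_seq_subset_I: "adm_seq G S act \<subseteq> I"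
begin

lemma I_trivial:
  assumes "subgroup H G"
  shows "(H, n, \<lambda>h. id) \<in> I"
  using indexing_I[unfolded indexing_system_def, THEN conjunct2, THEN conjunct1, rule_format, OF assms] .

lemma I_iso:
  assumes "(H, n, \<rho>) \<in> I" and "fhset G H n \<rho>'" and "bij_betw f {..<n} {..<n}"
    and "\<forall>h\<in>H. \<forall>i<n. f (\<rho>' h i) = \<rho> h (f i)"
  shows "(H, n, \<rho>') \<in> I"
  using indexing_I[unfolded indexing_system_def, THEN conjunct2, THEN conjunct2, THEN conjunct1,
      rule_format (no_asm), OF assms] .

lemma I_subobject:
  assumes "(H, n, \<rho>) \<in> I" and "fhset G H m \<rho>'" and "inj_on f {..<m}" and "f ` {..<m} \<subseteq> {..<n}"
    and "\<forall>h\<in>H. \<forall>i<m. f (\<rho>' h i) = \<rho> h (f i)"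
  shows "(H, m, \<rho>') \<in> I"
  using indexing_I[unfolded indexing_system_def, THEN conjunct2, THEN conjunct2, THEN conjunct2,
      THEN conjunct1, rule_format (no_asm), OF assms] .

lemma I_sum:
  assumes "(H, n, \<rho>) \<in> I" and "(H, m, \<rho>') \<in> I"
  shows "(H, n + m, hset_sum H n \<rho> m \<rho>') \<in> I"
  using indexing_I[unfolded indexing_system_def, THEN conjunct2, THEN conjunct2, THEN conjunct2,
      THEN conjunct2, THEN conjunct2, THEN conjunct2, THEN conjunct1, rule_format (no_asm), OF assms]
  unfolding hset_sum_def .

lemma I_self_induction:
  assumes "subgroup H G" and "subgroup K G" and "K \<subseteq> H" and "(K, n, \<rho>) \<in> I"
    and "\<exists>m \<tau>. (H, m, \<tau>) \<in> I \<and> induced_hset G H K 1 (\<lambda>h. id) m \<tau>"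
    and "fhset G H N \<rho>'" and "induced_hset G H K n \<rho> N \<rho>'"
  shows "(H, N, \<rho>') \<in> I"
  using indexing_I[unfolded indexing_system_def, THEN conjunct2, THEN conjunct2, THEN conjunct2,
      THEN conjunct2, THEN conjunct2, THEN conjunct2, THEN conjunct2, THEN conjunct2,
      rule_format (no_asm), OF assms] .

text \<open>\<open>L\<close> is typically the set of leaves of a subtree; enumerating it turns it into an \<open>H\<close>-set in
  the format of \<^const>\<open>fhset\<close>.\<close>

definition in_I where
  "in_I H L \<rho> \<longleftrightarrow> (\<forall>e. bij_betw e {..<card L} L \<longrightarrow> (H, card L, transfer_action e (card L) H \<rho>) \<in> I)"

lemma transfer_action_change_enumeration:
  assumes H: "subgroup H G" and a: "action_on H L \<rho>"
    and e: "bij_betw e {..<c} L" and e': "bij_betw e' {..<c} L"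
    and in_I: "(H, c, transfer_action e c H \<rho>) \<in> I"
  shows "(H, c, transfer_action e' c H \<rho>) \<in> I"
proof (rule I_iso[OF in_I fhset_transfer_action[OF H e' a]])
  define f where "f = the_inv_into {..<c} e \<circ> e'"
  show "bij_betw f {..<c} {..<c}"
    unfolding f_def using bij_betw_trans[OF e' bij_betw_the_inv_into[OF e]] .
  note E = bij_betw_lessThan_inverse[OF e] and E' = bij_betw_lessThan_inverse[OF e']
  show "\<forall>h\<in>H. \<forall>i<c. f (transfer_action e' c H \<rho> h i) = transfer_action e c H \<rho> h (f i)"
  proof (intro ballI allI impI)
    fix h i assume h: "h \<in> H" and i: "i < c"
    have r: "\<rho> h (e' i) \<in> L" using action_on_closed[OF a h E'(4)[OF i]] .
    have "f (transfer_action e' c H \<rho> h i) = the_inv_into {..<c} e (\<rho> h (e' i))"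
      unfolding f_def using transfer_action_apply[OF h i, of e' \<rho>] E'(1)[OF r] by simp
    also have "\<dots> = transfer_action e c H \<rho> h (f i)"
      unfolding f_def using transfer_action_apply[OF h E(2)[OF E'(4)[OF i]], of e \<rho>] E(1)[OF E'(4)[OF i]]
      by simp
    finally show "f (transfer_action e' c H \<rho> h i) = transfer_action e c H \<rho> h (f i)" .
  qed
qed

lemma in_I_intro:
  assumes "subgroup H G" and "action_on H L \<rho>" and "bij_betw e {..<card L} L"
    and "(H, card L, transfer_action e (card L) H \<rho>) \<in> I"
  shows "in_I H L \<rho>"
  unfolding in_I_def using transfer_action_change_enumeration[OF assms(1,2,3) _ assms(4)] by blast

lemma in_I_empty:
  assumes "subgroup H G"
  shows "in_I H {} \<rho>"
proof -
  have "transfer_action e 0 H \<rho> = (\<lambda>h. id)" for e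
    by (simp add: transfer_action_def fun_eq_iff)
  then show ?thesis unfolding in_I_def using I_trivial[OF assms] by simp
qed

lemma in_I_singleton:
  assumes H: "subgroup H G" and a: "action_on H {i} \<rho>"
  shows "in_I H {i} \<rho>"
proof -
  have "transfer_action e 1 H \<rho> = (\<lambda>h. id)" if e: "bij_betw e {..<1} {i}" for e
    using bij_betw_lessThan_inverse(3,4)[OF e, of 0] action_on_closed[OF a]
    by (auto simp: transfer_action_def fun_eq_iff)
  then show ?thesis unfolding in_I_def using I_trivial[OF H] by simp
qed

lemma in_I_Un:
  assumes H: "subgroup H G" and finite: "finite A" "finite B" and disjoint: "A \<inter> B = {}"
    and aA: "action_on H A \<rho>" and aB: "action_on H B \<rho>" and A: "in_I H A \<rho>" and B: "in_I H B \<rho>"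
  shows "in_I H (A \<union> B) \<rho>"
proof -
  obtain eA where eA: "bij_betw eA {..<card A} A"
    using ex_bij_betw_nat_finite[OF finite(1)] unfolding atLeast0LessThan by blast
  obtain eB where eB: "bij_betw eB {..<card B} B"
    using ex_bij_betw_nat_finite[OF finite(2)] unfolding atLeast0LessThan by blast
  let ?e = "\<lambda>i. if i < card A then eA i else eB (i - card A)"
  have "(H, card A + card B, transfer_action ?e (card A + card B) H \<rho>) \<in> I"
    unfolding transfer_action_Un[OF aA aB disjoint eA eB]
    using I_sum A B eA eB unfolding in_I_def by blast
  then show ?thesis
    using in_I_intro[OF H action_on_Un[OF aA aB]] bij_betw_lessThan_Un[OF eA eB disjoint]
      card_Un_disjoint[OF finite disjoint] by simp
qed

lemma in_I_induced:
  assumes H: "subgroup H G" and K: "subgroup K G" and KH: "K \<subseteq> H"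
    and finite: "finite L" and aL: "action_on H L \<rho>" and LiL: "Li \<subseteq> L" and aK: "action_on K Li \<rho>"
    and Li: "in_I K Li \<rho>"
    and quot: "\<exists>m \<tau>. (H, m, \<tau>) \<in> I \<and> induced_hset G H K 1 (\<lambda>h. id) m \<tau>"
    and cov: "\<forall>x\<in>L. \<exists>h\<in>H. \<exists>y\<in>Li. x = \<rho> h y"
    and sep: "\<forall>h\<in>H. \<forall>h'\<in>H. \<forall>y\<in>Li. \<forall>y'\<in>Li. \<rho> h y = \<rho> h' y' \<longrightarrow> inv h \<otimes> h' \<in> K"
  shows "in_I H L \<rho>"
  unfolding in_I_def
proof (intro allI impI)
  fix e assume e: "bij_betw e {..<card L} L"
  obtain ei where ei: "bij_betw ei {..<card Li} Li"
    using ex_bij_betw_nat_finite[OF finite_subset[OF LiL finite]] unfolding atLeast0LessThan by blast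
  show "(H, card L, transfer_action e (card L) H \<rho>) \<in> I"
    using I_self_induction[OF H K KH _ quot fhset_transfer_action[OF H e aL]
        induced_hset_transfer_action[OF H KH aL LiL aK e ei cov sep]] Li ei
    unfolding in_I_def by blast
qed

lemma orbit_quotient_in_I:
  assumes \<alpha>: "fhset G H k \<alpha>" and in_I: "(H, k, \<alpha>) \<in> I" and i0: "i0 < k"
  shows "\<exists>m \<tau>. (H, m, \<tau>) \<in> I \<and> induced_hset G H {h \<in> H. \<alpha> h i0 = i0} 1 (\<lambda>h. id) m \<tau>"
proof -
  have H: "subgroup H G" using fhset_subgroup[OF \<alpha>] .
  define orbit where "orbit = (\<lambda>h. \<alpha> h i0) ` H"
  have orbit_less: "orbit \<subseteq> {..<k}" unfolding orbit_def using fhset_less[OF \<alpha> _ i0] by auto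
  obtain e where e: "bij_betw e {..<card orbit} orbit"
    using ex_bij_betw_nat_finite[OF finite_subset[OF orbit_less]] unfolding atLeast0LessThan by blast
  note E = bij_betw_lessThan_inverse[OF e]
  define \<tau> where "\<tau> = transfer_action e (card orbit) H \<alpha>"
  have a: "action_on H orbit \<alpha>" unfolding orbit_def using action_on_orbit[OF \<alpha>] .
  have \<tau>: "fhset G H (card orbit) \<tau>" unfolding \<tau>_def using fhset_transfer_action[OF H e a] .
  have e_\<tau>: "e (\<tau> h i) = \<alpha> h (e i)" if "h \<in> H" "i < card orbit" for h i
    unfolding \<tau>_def transfer_action_apply[OF that] using E(1) action_on_closed[OF a that(1) E(4)[OF that(2)]] .
  have "(H, card orbit, \<tau>) \<in> I"
    using I_subobject[OF in_I \<tau> bij_betw_imp_inj_on[OF e]] orbit_less e_\<tau> bij_betw_imp_surj_on[OF e] by blast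
  moreover have "induced_hset G H {h \<in> H. \<alpha> h i0 = i0} 1 (\<lambda>h. id) (card orbit) \<tau>"
    unfolding induced_hset_one_point
  proof (intro exI conjI)
    have i0_orbit: "i0 \<in> orbit"
      unfolding orbit_def using subgroup.one_closed[OF H] fhset_one[OF \<alpha>] by force
    let ?b = "the_inv_into {..<card orbit} e i0"
    have \<tau>_b: "\<tau> h ?b = the_inv_into {..<card orbit} e (\<alpha> h i0)" if "h \<in> H" for h
      unfolding \<tau>_def transfer_action_apply[OF that E(2)[OF i0_orbit]] E(1)[OF i0_orbit] ..
    show "?b < card orbit" using E(2)[OF i0_orbit] .
    show "\<forall>x<card orbit. \<exists>h\<in>H. x = \<tau> h ?b"
    proof (intro allI impI)
      fix x assume x: "x < card orbit"
      then obtain h where h: "h \<in> H" "e x = \<alpha> h i0" using E(4)[OF x] unfolding orbit_def by auto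
      have "\<tau> h ?b = x" using \<tau>_b[OF h(1)] h(2)[symmetric] E(3)[OF x] by simp
      then show "\<exists>h\<in>H. x = \<tau> h ?b" using h(1) by metis
    qed
    show "\<forall>h\<in>H. \<forall>h'\<in>H. \<tau> h ?b = \<tau> h' ?b \<longleftrightarrow> (\<exists>s\<in>{h \<in> H. \<alpha> h i0 = i0}. h' = h \<otimes> s)"
    proof (intro ballI)
      fix h h' assume h: "h \<in> H" and h': "h' \<in> H"
      have "\<alpha> h i0 \<in> orbit" "\<alpha> h' i0 \<in> orbit" using h h' unfolding orbit_def by auto
      then have "\<tau> h ?b = \<tau> h' ?b \<longleftrightarrow> \<alpha> h i0 = \<alpha> h' i0"
        unfolding \<tau>_b[OF h] \<tau>_b[OF h']
        by (rule inj_on_eq_iff[OF bij_betw_imp_inj_on[OF bij_betw_the_inv_into[OF e]]])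
      then show "\<tau> h ?b = \<tau> h' ?b \<longleftrightarrow> (\<exists>s\<in>{h \<in> H. \<alpha> h i0 = i0}. h' = h \<otimes> s)"
        using orbit_eq_iff[OF \<alpha> i0 h h'] by simp
    qed
  qed
  ultimately show ?thesis by blast
qed

end

text \<open>The inductive step of \<open>in_I_tree\<close> below: \<open>H\<close> acts through \<open>\<rho>\<close> on the leaves and through \<open>\<alpha>\<close>
  on the children \<open>ts\<close> of a fixed vertex, and \<open>children_in_I\<close> is the induction hypothesis.\<close>

locale fixed_node = indexing_system_over +
  fixes H \<rho> ts \<alpha>
  assumes subgroup_H: "subgroup H G"
    and leaves_disjoint:
      "\<forall>i<length ts. \<forall>i'<length ts. i \<noteq> i' \<longrightarrow> set (leaves (ts ! i)) \<inter> set (leaves (ts ! i')) = {}"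
    and action: "action_on H (\<Union>i<length ts. set (leaves (ts ! i))) \<rho>"
    and fhset_\<alpha>: "fhset G H (length ts) \<alpha>" and \<alpha>_in_I: "(H, length ts, \<alpha>) \<in> I"
    and \<alpha>_children: "\<forall>h\<in>H. \<forall>i<length ts. tree_iso (tree_act act h (\<rho> h) (ts ! i)) (ts ! \<alpha> h i)"
    and children_in_I: "\<forall>i<length ts. \<forall>K. subgroup K G \<longrightarrow> action_on K (set (leaves (ts ! i))) \<rho> \<longrightarrow>
      (\<forall>h\<in>K. tree_iso (tree_act act h (\<rho> h) (ts ! i)) (ts ! i)) \<longrightarrow> in_I K (set (leaves (ts ! i))) \<rho>"
begin

lemma image_leaves_child: "h \<in> H \<Longrightarrow> i < length ts \<Longrightarrow> \<rho> h ` set (leaves (ts ! i)) = set (leaves (ts ! \<alpha> h i))"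
  using tree_iso_leaves \<alpha>_children leaves_tree_act by metis

lemma action_on_invariant:
  assumes J: "J \<subseteq> {..<length ts}" and invariant: "\<forall>h\<in>H. \<forall>i\<in>J. \<alpha> h i \<in> J"
  shows "action_on H (\<Union>i\<in>J. set (leaves (ts ! i))) \<rho>"
proof (rule action_on_subset[OF action subset_refl])
  show "(\<Union>i\<in>J. set (leaves (ts ! i))) \<subseteq> (\<Union>i<length ts. set (leaves (ts ! i)))" using J by blast
  show "\<forall>h\<in>H. \<forall>y\<in>\<Union>i\<in>J. set (leaves (ts ! i)). \<rho> h y \<in> (\<Union>i\<in>J. set (leaves (ts ! i)))"
    using image_leaves_child invariant J by blast
qed (rule subgroup.one_closed[OF subgroup_H])

lemma in_I_orbit:
  assumes i0: "i0 < length ts"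
  shows "in_I H (\<Union>i\<in>(\<lambda>h. \<alpha> h i0) ` H. set (leaves (ts ! i))) \<rho>"
proof -
  let ?K = "{h \<in> H. \<alpha> h i0 = i0}" and ?orbit = "(\<lambda>h. \<alpha> h i0) ` H"
  have orbit_less: "?orbit \<subseteq> {..<length ts}" using fhset_less[OF fhset_\<alpha> _ i0] by blast
  have K: "subgroup ?K G" using subgroup_stabilizer[OF fhset_\<alpha> i0] .
  have KH: "?K \<subseteq> H" by blast
  have i0_orbit: "i0 \<in> ?orbit" using subgroup.one_closed[OF subgroup_H] fhset_one[OF fhset_\<alpha>] by force
  have "\<forall>k\<in>?K. \<forall>y\<in>set (leaves (ts ! i0)). \<rho> k y \<in> set (leaves (ts ! i0))"
    using image_leaves_child[OF _ i0] by fastforce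
  then have aK: "action_on ?K (set (leaves (ts ! i0))) \<rho>"
    using action_on_subset[OF action KH] i0 subgroup.one_closed[OF K] by (meson UN_upper lessThan_iff)
  have "\<forall>h\<in>?K. tree_iso (tree_act act h (\<rho> h) (ts ! i0)) (ts ! i0)"
    using \<alpha>_children i0 by fastforce
  then have iK: "in_I ?K (set (leaves (ts ! i0))) \<rho>"
    using children_in_I i0 K aK by blast
  have quot: "\<exists>m \<tau>. (H, m, \<tau>) \<in> I \<and> induced_hset G H ?K 1 (\<lambda>h. id) m \<tau>"
    using orbit_quotient_in_I[OF fhset_\<alpha> \<alpha>_in_I i0] .
  have cov: "\<forall>y\<in>\<Union>i\<in>?orbit. set (leaves (ts ! i)). \<exists>h\<in>H. \<exists>y0\<in>set (leaves (ts ! i0)). y = \<rho> h y0"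
    using image_leaves_child[OF _ i0] by blast
  have sep: "\<forall>h\<in>H. \<forall>h'\<in>H. \<forall>y\<in>set (leaves (ts ! i0)). \<forall>y'\<in>set (leaves (ts ! i0)).
      \<rho> h y = \<rho> h' y' \<longrightarrow> inv h \<otimes> h' \<in> ?K"
  proof (intro ballI impI)
    fix h h' y y' assume h: "h \<in> H" "h' \<in> H"
      and y: "y \<in> set (leaves (ts ! i0))" "y' \<in> set (leaves (ts ! i0))" and eq: "\<rho> h y = \<rho> h' y'"
    \<comment> \<open>the leaves of distinct children are disjoint, so \<open>h\<close> and \<open>h'\<close> move \<open>i0\<close> to the same child\<close>
    have "\<alpha> h i0 = \<alpha> h' i0"
      using leaves_disjoint fhset_less[OF fhset_\<alpha> _ i0] h image_leaves_child[OF _ i0] y eq by blast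
    then obtain s where "s \<in> ?K" "h' = h \<otimes> s" using orbit_eq_iff[OF fhset_\<alpha> i0 h] by blast
    then show "inv h \<otimes> h' \<in> ?K"
      using subgroup.mem_carrier[OF subgroup_H] h by (simp add: inv_mult_cancel_left)
  qed
  have aL: "action_on H (\<Union>i\<in>?orbit. set (leaves (ts ! i))) \<rho>"
    using action_on_invariant[OF orbit_less] action_on_closed[OF action_on_orbit[OF fhset_\<alpha>]] by blast
  have finite: "finite (\<Union>i\<in>?orbit. set (leaves (ts ! i)))"
    using finite_subset[OF orbit_less] by blast
  have LiL: "set (leaves (ts ! i0)) \<subseteq> (\<Union>i\<in>?orbit. set (leaves (ts ! i)))"
    using i0_orbit by blast
  show ?thesis by (rule in_I_induced[OF subgroup_H K KH finite aL LiL aK iK quot cov sep])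
qed

lemma in_I_UN_Un:
  assumes J1: "J1 \<subseteq> {..<length ts}" "\<forall>h\<in>H. \<forall>i\<in>J1. \<alpha> h i \<in> J1" "in_I H (\<Union>i\<in>J1. set (leaves (ts ! i))) \<rho>"
    and J2: "J2 \<subseteq> {..<length ts}" "\<forall>h\<in>H. \<forall>i\<in>J2. \<alpha> h i \<in> J2" "in_I H (\<Union>i\<in>J2. set (leaves (ts ! i))) \<rho>"
    and disjoint: "J1 \<inter> J2 = {}"
  shows "in_I H (\<Union>i\<in>J1 \<union> J2. set (leaves (ts ! i))) \<rho>"
proof -
  have finite: "finite (\<Union>i\<in>J. set (leaves (ts ! i)))" if "J \<subseteq> {..<length ts}" for J
    using finite_subset[OF that] by blast
  have "(\<Union>i\<in>J1. set (leaves (ts ! i))) \<inter> (\<Union>i\<in>J2. set (leaves (ts ! i))) = {}"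
    using leaves_disjoint J1(1) J2(1) disjoint by blast
  then show ?thesis
    using in_I_Un[OF subgroup_H finite[OF J1(1)] finite[OF J2(1)] _
        action_on_invariant[OF J1(1,2)] action_on_invariant[OF J2(1,2)] J1(3) J2(3)]
    by (simp add: UN_Un)
qed

lemma in_I_invariant:
  assumes "J \<subseteq> {..<length ts}" and "\<forall>h\<in>H. \<forall>i\<in>J. \<alpha> h i \<in> J"
  shows "in_I H (\<Union>i\<in>J. set (leaves (ts ! i))) \<rho>"
  using assms
proof (induction "card J" arbitrary: J rule: less_induct)
  case less
  show ?case
  proof (cases "J = {}")
    case True
    then show ?thesis using in_I_empty[OF subgroup_H] by simp
  next
    case False
    then obtain i0 where i0J: "i0 \<in> J" by blast
    let ?orbit = "(\<lambda>h. \<alpha> h i0) ` H"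
    have i0: "i0 < length ts" using i0J less.prems(1) by blast
    have orbit_J: "?orbit \<subseteq> J" using less.prems(2) i0J by blast
    have i0_orbit: "i0 \<in> ?orbit" using subgroup.one_closed[OF subgroup_H] fhset_one[OF fhset_\<alpha>] by force
    have "card (J - ?orbit) < card J"
      using finite_subset[OF less.prems(1)] i0J i0_orbit by (intro psubset_card_mono) auto
    moreover have J'_invariant: "\<forall>h\<in>H. \<forall>i\<in>J - ?orbit. \<alpha> h i \<in> J - ?orbit"
      using invariant_Diff_orbit[OF fhset_\<alpha> less.prems] .
    ultimately have "in_I H (\<Union>i\<in>J - ?orbit. set (leaves (ts ! i))) \<rho>"
      using less.hyps less.prems(1) by blast
    moreover have "\<forall>h\<in>H. \<forall>i\<in>?orbit. \<alpha> h i \<in> ?orbit"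
      using action_on_closed[OF action_on_orbit[OF fhset_\<alpha>]] by blast
    moreover have "?orbit \<subseteq> {..<length ts}" "J - ?orbit \<subseteq> {..<length ts}"
      using orbit_J less.prems(1) by auto
    ultimately have "in_I H (\<Union>i\<in>?orbit \<union> (J - ?orbit). set (leaves (ts ! i))) \<rho>"
      using in_I_UN_Un[OF _ _ in_I_orbit[OF i0] _ J'_invariant] by blast
    then show ?thesis using orbit_J by (simp add: Un_absorb1)
  qed
qed

lemma in_I_children: "in_I H (\<Union>i<length ts. set (leaves (ts ! i))) \<rho>"
  using in_I_invariant[of "{..<length ts}"] fhset_less[OF fhset_\<alpha>] by blast

end

context indexing_system_over
begin

lemma in_I_tree:
  "labels_ok S t \<Longrightarrow> distinct (leaves t) \<Longrightarrow> subgroup H G \<Longrightarrow> action_on H (set (leaves t)) \<rho> \<Longrightarrow>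
   \<forall>h\<in>H. tree_iso (tree_act act h (\<rho> h) t) t \<Longrightarrow> in_I H (set (leaves t)) \<rho>"
proof (induction t arbitrary: H)
  case (Leaf i)
  then show ?case using in_I_singleton by simp
next
  case (Node x ts)
  have "set ts = (\<lambda>i. ts ! i) ` {..<length ts}" by (auto simp: in_set_conv_nth)
  then have leaves: "set (leaves (Node x ts)) = (\<Union>i<length ts. set (leaves (ts ! i)))" by simp
  have x: "x \<in> S (length ts)" using Node.prems(1) by simp
  obtain \<alpha> where \<alpha>: "fhset G H (length ts) \<alpha>" "\<forall>h\<in>H. act (length ts) h (\<alpha> h) x = x"
    "\<forall>h\<in>H. \<forall>i<length ts. tree_iso (tree_act act h (\<rho> h) (ts ! i)) (ts ! \<alpha> h i)"
    using fixed_Node_vertex_action[OF x Node.prems(3,5)] by blast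
  have "(H, length ts, \<alpha>) \<in> I"
    using adm_seq_subset_I \<alpha> Node.prems(1) unfolding adm_seq_def by auto
  moreover have "\<forall>i<length ts. \<forall>i'<length ts. i \<noteq> i' \<longrightarrow> set (leaves (ts ! i)) \<inter> set (leaves (ts ! i')) = {}"
    using distinct_concat_nth_disjoint[of "map leaves ts"] Node.prems(2) by simp
  moreover have "\<forall>i<length ts. \<forall>K. subgroup K G \<longrightarrow> action_on K (set (leaves (ts ! i))) \<rho> \<longrightarrow>
      (\<forall>h\<in>K. tree_iso (tree_act act h (\<rho> h) (ts ! i)) (ts ! i)) \<longrightarrow> in_I K (set (leaves (ts ! i))) \<rho>"
    using Node.IH Node.prems(1,2) by (auto simp: distinct_concat_iff)
  ultimately interpret fixed_node G S act I H \<rho> ts \<alpha>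
    using Node.prems(3,4) \<alpha>(1,3) leaves by intro_locales (simp add: fixed_node_axioms_def)
  show ?case using in_I_children leaves by simp
qed

lemma adm_fo_subset_I: "adm_fo G S act \<subseteq> I"
proof
  fix T assume "T \<in> adm_fo G S act"
  then obtain H n \<rho> t where T: "T = (H, n, \<rho>)" and \<rho>: "fhset G H n \<rho>"
    and wf: "fo_wf S n t" and fixed: "tree_fixed H \<rho> t"
    using adm_fo_iff by (metis prod_cases3)
  have "in_I H {..<n} \<rho>"
    using in_I_tree[of t H \<rho>] wf fixed fhset_subgroup[OF \<rho>] fhset_action_on[OF \<rho>]
    unfolding fo_wf_def tree_fixed_def by simp
  then have "(H, n, transfer_action id n H \<rho>) \<in> I" unfolding in_I_def by simp
  then show "T \<in> I" using T transfer_action_id[OF \<rho>] by simp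
qed

end

lemma (in sigma_free_symseq) adm_fo_subset_gen_indexing_system:
  "adm_fo G S act \<subseteq> gen_indexing_system G (adm_seq G S act)"
  unfolding gen_indexing_system_def
proof (rule Inter_greatest)
  fix I assume "I \<in> {I. indexing_system G I \<and> adm_seq G S act \<subseteq> I}"
  then interpret indexing_system_over G S act I by unfold_locales auto
  show "adm_fo G S act \<subseteq> I" by (rule adm_fo_subset_I)
qed

theorem theorem4p6:
  fixes G :: "('g, 'b) monoid_scheme"
    and S :: "nat \<Rightarrow> 'x set"
    and act :: "nat \<Rightarrow> 'g \<Rightarrow> (nat \<Rightarrow> nat) \<Rightarrow> 'x \<Rightarrow> 'x"
  assumes "group G" and "finite (carrier G)"
    and "symseq G S act"
    and "levels_sigma_free G S act"
    and "level_has_G_fixed G S act 0"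
    and "level_has_G_fixed G S act 2"
  shows "fo_sigma_free G S act \<and> (\<forall>n. fo_has_G_fixed G S act n) \<and>
         adm_fo G S act = gen_indexing_system G (adm_seq G S act)"
proof -
  interpret sigma_free_symseq G S act
    by (intro sigma_free_symseq.intro symseq_action.intro symseq_action_axioms.intro
        sigma_free_symseq_axioms.intro assms)
  interpret symseq_with_fixed_points G S act
    by (intro symseq_with_fixed_points.intro symseq_with_fixed_points_axioms.intro
        symseq_action_axioms assms)
  show ?thesis
    by (intro conjI allI sigma_free has_G_fixed subset_antisym adm_fo_subset_gen_indexing_system
        gen_indexing_system_subset_adm_fo)
qed

end
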